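(* If $X$ is a connected weighted unicyclic graph whose cycle $C_p$ (with the weights inherited from $X$) has nonsingular subdivision $S(C_p)$, then no vertex of $S(X)$ is sedentary. In particular, if $X$ is a connected unweighted non-bipartite unicyclic graph, then no vertex of $S(X)$ is sedentary.
   Context: Graphs are simple, undirected, with nonzero real edge weights; $A(\cdot)$ is the weighted adjacency matrix; unweighted means all weights are $1$; nonsingular means the adjacency matrix is invertible. The subdivision $S(X)$ replaces each edge $\{u,v\}$ of weight $\omega$ by a new vertex $w$ and edges $\{u,w\},\{w,v\}$ of weight $\omega$. With $U(t)=e^{itA}$, a vertex $u$ is sedentary if $\inf_{t>0}|U(t)_{u,u}|\ge C$ for some $0<C\le1$, and not sedentary if the infimum is $0$. *)

theory Defs
  imports "HOL-Analysis.Analysis"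
begin

text \<open>A weighted graph is a finite vertex set V together with a weight function w;
  {u,v} is an edge iff w u v is nonzero. The weighted adjacency matrix is w restricted to V.\<close>

definition wgraph :: "'v set \<Rightarrow> ('v \<Rightarrow> 'v \<Rightarrow> real) \<Rightarrow> bool" where
  "wgraph V w \<longleftrightarrow> finite V \<and> (\<forall>u v. w u v = w v u) \<and> (\<forall>u. w u u = 0)
     \<and> (\<forall>u v. w u v \<noteq> 0 \<longrightarrow> u \<in> V \<and> v \<in> V)"

definition edges :: "'v set \<Rightarrow> ('v \<Rightarrow> 'v \<Rightarrow> real) \<Rightarrow> 'v set set" where
  "edges V w = {{u, v} | u v. u \<in> V \<and> v \<in> V \<and> w u v \<noteq> 0}"

definition connected_graph :: "'v set \<Rightarrow> ('v \<Rightarrow> 'v \<Rightarrow> real) \<Rightarrow> bool" where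
  "connected_graph V w \<longleftrightarrow> V \<noteq> {} \<and>
     (\<forall>u\<in>V. \<forall>v\<in>V. (u, v) \<in> {(a, b). w a b \<noteq> 0}\<^sup>*)"

definition is_cycle :: "'v set \<Rightarrow> ('v \<Rightarrow> 'v \<Rightarrow> real) \<Rightarrow> 'v list \<Rightarrow> bool" where
  "is_cycle V w cs \<longleftrightarrow> length cs \<ge> 3 \<and> distinct cs \<and> set cs \<subseteq> V \<and>
     (\<forall>i < length cs. w (cs ! i) (cs ! ((i + 1) mod length cs)) \<noteq> 0)"

definition cycle_edges :: "'v list \<Rightarrow> 'v set set" where
  "cycle_edges cs = {{cs ! i, cs ! ((i + 1) mod length cs)} | i. i < length cs}"

definition unicyclic :: "'v set \<Rightarrow> ('v \<Rightarrow> 'v \<Rightarrow> real) \<Rightarrow> bool" where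
  "unicyclic V w \<longleftrightarrow> connected_graph V w \<and>
     card {cycle_edges cs | cs. is_cycle V w cs} = 1"

definition cycle_weight :: "('v \<Rightarrow> 'v \<Rightarrow> real) \<Rightarrow> 'v list \<Rightarrow> 'v \<Rightarrow> 'v \<Rightarrow> real" where
  "cycle_weight w cs a b = (if {a, b} \<in> cycle_edges cs then w a b else 0)"

text \<open>Subdivision: vertices Inl v (old) and Inr e (one new vertex per edge e).\<close>
definition subdiv_verts :: "'v set \<Rightarrow> ('v \<Rightarrow> 'v \<Rightarrow> real) \<Rightarrow> ('v + 'v set) set" where
  "subdiv_verts V w = Inl ` V \<union> Inr ` edges V w"

fun subdiv_weight :: "'v set \<Rightarrow> ('v \<Rightarrow> 'v \<Rightarrow> real) \<Rightarrow> ('v + 'v set) \<Rightarrow> ('v + 'v set) \<Rightarrow> real" where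
  "subdiv_weight V w (Inl u) (Inr e) =
     (if e \<in> edges V w \<and> u \<in> e then (\<Sum>v\<in>e - {u}. w u v) else 0)"
| "subdiv_weight V w (Inr e) (Inl u) =
     (if e \<in> edges V w \<and> u \<in> e then (\<Sum>v\<in>e - {u}. w u v) else 0)"
| "subdiv_weight V w _ _ = 0"

text \<open>Matrix powers and the transition matrix U(t) = exp(i t A) as its power series.\<close>
fun mat_pow :: "'a set \<Rightarrow> ('a \<Rightarrow> 'a \<Rightarrow> real) \<Rightarrow> nat \<Rightarrow> 'a \<Rightarrow> 'a \<Rightarrow> real" where
  "mat_pow V A 0 u v = (if u = v then 1 else 0)"
| "mat_pow V A (Suc k) u v = (\<Sum>x\<in>V. A u x * mat_pow V A k x v)"

definition transition :: "'a set \<Rightarrow> ('a \<Rightarrow> 'a \<Rightarrow> real) \<Rightarrow> real \<Rightarrow> 'a \<Rightarrow> 'a \<Rightarrow> complex" where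
  "transition V A t u v =
     (\<Sum>k. (\<i> * complex_of_real t) ^ k / of_nat (fact k) * complex_of_real (mat_pow V A k u v))"

definition sedentary :: "'a set \<Rightarrow> ('a \<Rightarrow> 'a \<Rightarrow> real) \<Rightarrow> 'a \<Rightarrow> bool" where
  "sedentary V A u \<longleftrightarrow> (\<exists>C. 0 < C \<and> C \<le> 1 \<and>
     C \<le> (INF t\<in>{0<..}. norm (transition V A t u u)))"

definition not_sedentary :: "'a set \<Rightarrow> ('a \<Rightarrow> 'a \<Rightarrow> real) \<Rightarrow> 'a \<Rightarrow> bool" where
  "not_sedentary V A u \<longleftrightarrow> (INF t\<in>{0<..}. norm (transition V A t u u)) = 0"

definition nonsingular :: "'a set \<Rightarrow> ('a \<Rightarrow> 'a \<Rightarrow> real) \<Rightarrow> bool" where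
  "nonsingular V A \<longleftrightarrow> (\<exists>B. \<forall>u\<in>V. \<forall>v\<in>V.
     (\<Sum>x\<in>V. A u x * B x v) = (if u = v then 1 else 0) \<and>
     (\<Sum>x\<in>V. B u x * A x v) = (if u = v then 1 else 0))"

definition unweighted :: "('v \<Rightarrow> 'v \<Rightarrow> real) \<Rightarrow> bool" where
  "unweighted w \<longleftrightarrow> (\<forall>u v. w u v \<noteq> 0 \<longrightarrow> w u v = 1)"

definition bipartite :: "'v set \<Rightarrow> ('v \<Rightarrow> 'v \<Rightarrow> real) \<Rightarrow> bool" where
  "bipartite V w \<longleftrightarrow> (\<exists>f :: 'v \<Rightarrow> bool. \<forall>u\<in>V. \<forall>v\<in>V. w u v \<noteq> 0 \<longrightarrow> f u \<noteq> f v)"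

end

theory Submission
  imports Defs "Jordan_Normal_Form.Determinant"
begin

definition exp_i_series :: "(nat \<Rightarrow> real) \<Rightarrow> real \<Rightarrow> complex" where
  "exp_i_series c t = (\<Sum>k. (\<i> * of_real t) ^ k / of_nat (fact k) * of_real (c k))"

lemma transition_eq_exp_i_series:
  "transition W A t a b = exp_i_series (\<lambda>k. mat_pow W A k a b) t"
  unfolding transition_def exp_i_series_def ..

lemma exp_i_series_eq_power_series:
  "exp_i_series c t = (\<Sum>n. \<i> ^ n * of_real (c n) / of_nat (fact n) * of_real t ^ n)"
  unfolding exp_i_series_def by (simp add: power_mult_distrib mult_ac)

lemma summable_exp_i_coeffs:
  assumes coeff_bound: "\<And>n. \<bar>c n\<bar> \<le> C * K ^ n"
  shows "summable (\<lambda>n. \<i> ^ n * of_real (c n) / of_nat (fact n) * (y :: complex) ^ n)"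
proof (rule summable_comparison_test')
  show "summable (\<lambda>n. C * (inverse (fact n) * (K * norm y) ^ n))"
    by (intro summable_mult summable_exp)
  fix n
  have "norm (\<i> ^ n * of_real (c n) / of_nat (fact n) * y ^ n) = \<bar>c n\<bar> * (norm y ^ n / fact n)"
    by (simp add: norm_mult norm_divide norm_power)
  also have "\<dots> \<le> (C * K ^ n) * (norm y ^ n / fact n)"
    by (intro mult_right_mono coeff_bound) auto
  also have "\<dots> = C * (inverse (fact n) * (K * norm y) ^ n)"
    by (simp add: power_mult_distrib field_simps)
  finally show "norm (\<i> ^ n * of_real (c n) / of_nat (fact n) * y ^ n)
      \<le> C * (inverse (fact n) * (K * norm y) ^ n)" .
qed

context
  fixes c :: "nat \<Rightarrow> real" and K :: real
  assumes coeff_bound: "\<And>n. \<bar>c n\<bar> \<le> K ^ n"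
begin

lemma summable_exp_i_series:
  "summable (\<lambda>k. (\<i> * of_real t) ^ k / of_nat (fact k) * of_real (c k))"
proof -
  have "\<bar>c n\<bar> \<le> 1 * K ^ n" for n
    using coeff_bound by simp
  from summable_exp_i_coeffs[OF this, of "of_real t"] show ?thesis
    by (simp add: power_mult_distrib mult_ac)
qed

lemma exp_i_series_has_vector_derivative:
  "(exp_i_series c has_vector_derivative \<i> * exp_i_series (\<lambda>n. c (Suc n)) t) (at t within S)"
proof -
  define a where "a n = \<i> ^ n * of_real (c n) / of_nat (fact n)" for n
  have coeff_bound': "\<bar>c n\<bar> \<le> 1 * K ^ n" for n
    using coeff_bound by simp
  have shifted_bound: "\<bar>c (Suc n)\<bar> \<le> K * K ^ n" for n
    using coeff_bound[of "Suc n"] by simp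
  have "diffs a n * of_real t ^ n = \<i> * (\<i> ^ n * of_real (c (Suc n)) / of_nat (fact n) * of_real t ^ n)"
    for n
  proof -
    have "(of_nat (fact (Suc n)) :: complex) = of_nat (Suc n) * of_nat (fact n)"
      by (simp only: fact_Suc of_nat_mult of_nat_id)
    moreover have "(of_nat (Suc n) :: complex) \<noteq> 0"
      by (simp only: of_nat_eq_0_iff)
    ultimately show ?thesis
      by (simp add: diffs_def a_def field_simps del: of_nat_Suc)
  qed
  then have "(\<Sum>n. diffs a n * of_real t ^ n) = \<i> * exp_i_series (\<lambda>n. c (Suc n)) t"
    unfolding exp_i_series_eq_power_series
    using suminf_mult[OF summable_exp_i_coeffs[OF shifted_bound]] by simp
  moreover have "summable (\<lambda>n. a n * y ^ n)" for y
    unfolding a_def by (rule summable_exp_i_coeffs[OF coeff_bound'])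
  ultimately have "((\<lambda>z. \<Sum>n. a n * z ^ n) has_field_derivative \<i> * exp_i_series (\<lambda>n. c (Suc n)) t)
      (at (of_real t))"
    using termdiffs_strong_converges_everywhere by metis
  moreover have "exp_i_series c = (\<lambda>x. \<Sum>n. a n * of_real x ^ n)"
    by (simp add: fun_eq_iff exp_i_series_eq_power_series a_def)
  ultimately show ?thesis
    using has_vector_derivative_real_field by simp
qed

lemma Im_exp_i_series:
  assumes "\<And>n. odd n \<Longrightarrow> c n = 0"
  shows "Im (exp_i_series c t) = 0"
proof -
  have "Im ((\<i> * of_real t) ^ k / of_nat (fact k) * of_real (c k)) = 0" for k
  proof (cases "even k")
    case True
    then obtain m where k: "k = 2 * m" by (auto elim: evenE)
    have "(\<i> * of_real t) ^ k / of_nat (fact k) * of_real (c k) = of_real ((-1) ^ m * t ^ k / fact k * c k)"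
      unfolding k power_mult_distrib power_mult by simp
    then show ?thesis by (metis Im_complex_of_real)
  qed (use assms in simp)
  then show ?thesis
    unfolding exp_i_series_def by (subst Im_suminf[OF summable_exp_i_series]) simp
qed

end

lemma exp_i_series_sum:
  assumes "finite F" and "\<And>x n. x \<in> F \<Longrightarrow> \<bar>d x n\<bar> \<le> K x ^ n"
  shows "exp_i_series (\<lambda>n. \<Sum>x\<in>F. g x * d x n) t = (\<Sum>x\<in>F. of_real (g x) * exp_i_series (d x) t)"
proof -
  have "exp_i_series (\<lambda>n. \<Sum>x\<in>F. g x * d x n) t
     = (\<Sum>k. \<Sum>x\<in>F. of_real (g x) * ((\<i> * of_real t) ^ k / of_nat (fact k) * of_real (d x k)))"
    unfolding exp_i_series_def by (simp add: sum_distrib_left mult_ac)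
  also have "\<dots> = (\<Sum>x\<in>F. \<Sum>k. of_real (g x) * ((\<i> * of_real t) ^ k / of_nat (fact k) * of_real (d x k)))"
    using assms by (intro suminf_sum summable_mult summable_exp_i_series) auto
  also have "\<dots> = (\<Sum>x\<in>F. of_real (g x) * exp_i_series (d x) t)"
    unfolding exp_i_series_def
    using assms by (intro sum.cong refl suminf_mult summable_exp_i_series) auto
  finally show ?thesis .
qed

lemma exp_i_series_0 [simp]: "exp_i_series c 0 = of_real (c 0)"
proof -
  have "(\<lambda>k. (\<i> * of_real 0) ^ k / of_nat (fact k) * of_real (c k)) = (\<lambda>k. if k = 0 then of_real (c 0) else 0)"
    by (auto simp: fun_eq_iff)
  moreover have "(\<lambda>k. if k = 0 then of_real (c 0) else 0) sums (of_real (c 0) :: complex)"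
    using sums_single[of 0 "\<lambda>_. of_real (c 0)"] by simp
  ultimately show ?thesis
    unfolding exp_i_series_def by (simp add: sums_iff)
qed

lemma mat_pow_parity:
  fixes f :: "'a \<Rightarrow> bool"
  assumes "\<And>x y. A x y \<noteq> 0 \<Longrightarrow> f x \<noteq> f y" and "mat_pow W A n a b \<noteq> 0"
  shows "f a = f b \<longleftrightarrow> even n"
  using assms(2)
proof (induction n arbitrary: a)
  case (Suc n)
  then have "(\<Sum>x\<in>W. A a x * mat_pow W A n x b) \<noteq> 0"
    by simp
  then obtain x where "x \<in> W" "A a x * mat_pow W A n x b \<noteq> 0"
    using sum.not_neutral_contains_not_neutral by blast
  then have "f a \<noteq> f x" and "f x = f b \<longleftrightarrow> even n"
    using assms(1) Suc.IH by auto
  then show ?case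
    by (cases "f x") auto
qed (simp split: if_splits)

context
  fixes W :: "'a set" and A :: "'a \<Rightarrow> 'a \<Rightarrow> real"
  assumes finite: "finite W"
begin

lemma abs_mat_pow_le:
  assumes "a \<in> W"
  shows "\<bar>mat_pow W A n a b\<bar> \<le> (\<Sum>a\<in>W. \<Sum>x\<in>W. \<bar>A a x\<bar>) ^ n"
  using assms
proof (induction n arbitrary: a)
  case (Suc n)
  define K where "K = (\<Sum>a\<in>W. \<Sum>x\<in>W. \<bar>A a x\<bar>)"
  have "K \<ge> 0"
    unfolding K_def by (intro sum_nonneg) auto
  have row: "(\<Sum>x\<in>W. \<bar>A a x\<bar>) \<le> K"
    unfolding K_def using Suc.prems finite
    by (intro member_le_sum[where f="\<lambda>a. \<Sum>x\<in>W. \<bar>A a x\<bar>"]) (auto intro: sum_nonneg)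
  have "\<bar>mat_pow W A (Suc n) a b\<bar> \<le> (\<Sum>x\<in>W. \<bar>A a x\<bar> * \<bar>mat_pow W A n x b\<bar>)"
    by (simp add: sum_abs[THEN order_trans] abs_mult)
  also have "\<dots> \<le> (\<Sum>x\<in>W. \<bar>A a x\<bar> * K ^ n)"
    using Suc.IH unfolding K_def by (intro sum_mono mult_left_mono) auto
  also have "\<dots> = (\<Sum>x\<in>W. \<bar>A a x\<bar>) * K ^ n"
    by (simp add: sum_distrib_right)
  also have "\<dots> \<le> K * K ^ n"
    using row \<open>K \<ge> 0\<close> by (intro mult_right_mono) auto
  finally show ?case
    unfolding K_def by simp
qed simp

lemma mat_pow_Suc_right:
  assumes "a \<in> W" and "b \<in> W"
  shows "mat_pow W A (Suc n) a b = (\<Sum>x\<in>W. mat_pow W A n a x * A x b)"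
  using assms(1)
proof (induction n arbitrary: a)
  case 0
  then show ?case
    using assms(2) finite
    by (simp add: if_distrib[of "\<lambda>z. _ * z"] if_distrib[of "\<lambda>z. z * _"] cong: if_cong)
next
  case (Suc n)
  have "mat_pow W A (Suc (Suc n)) a b = (\<Sum>x\<in>W. A a x * mat_pow W A (Suc n) x b)"
    by (rule mat_pow.simps(2))
  also have "\<dots> = (\<Sum>x\<in>W. A a x * (\<Sum>y\<in>W. mat_pow W A n x y * A y b))"
    by (intro sum.cong refl) (simp only: Suc.IH)
  also have "\<dots> = (\<Sum>x\<in>W. \<Sum>y\<in>W. A a x * mat_pow W A n x y * A y b)"
    by (simp add: sum_distrib_left mult.assoc)
  also have "\<dots> = (\<Sum>y\<in>W. (\<Sum>x\<in>W. A a x * mat_pow W A n x y) * A y b)"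
    by (subst sum.swap) (simp add: sum_distrib_right)
  finally show ?case
    by simp
qed

lemma transition_has_vector_derivative_left:
  assumes "a \<in> W"
  shows "((\<lambda>t. transition W A t a b) has_vector_derivative
           \<i> * (\<Sum>x\<in>W. of_real (A a x) * transition W A t x b)) (at t within S)"
proof -
  have "(\<Sum>x\<in>W. of_real (A a x) * transition W A t x b)
      = exp_i_series (\<lambda>n. mat_pow W A (Suc n) a b) t"
    unfolding mat_pow.simps transition_eq_exp_i_series
    by (rule exp_i_series_sum[OF finite abs_mat_pow_le, symmetric])
  then show ?thesis
    unfolding transition_eq_exp_i_series
    by (simp only:) (rule exp_i_series_has_vector_derivative[OF abs_mat_pow_le[OF assms]])
qed

lemma transition_has_vector_derivative_right:
  assumes "a \<in> W" and "b \<in> W"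
  shows "((\<lambda>t. transition W A t a b) has_vector_derivative
           \<i> * (\<Sum>x\<in>W. of_real (A x b) * transition W A t a x)) (at t within S)"
proof -
  have "(\<Sum>x\<in>W. of_real (A x b) * transition W A t a x)
      = exp_i_series (\<lambda>n. \<Sum>x\<in>W. A x b * mat_pow W A n a x) t"
    unfolding transition_eq_exp_i_series
    by (rule exp_i_series_sum[OF finite abs_mat_pow_le[OF assms(1)], symmetric])
  also have "\<dots> = exp_i_series (\<lambda>n. mat_pow W A (Suc n) a b) t"
    using mat_pow_Suc_right[OF assms] by (simp add: mult.commute)
  finally show ?thesis
    unfolding transition_eq_exp_i_series
    by (simp only:) (rule exp_i_series_has_vector_derivative[OF abs_mat_pow_le[OF assms(1)]])
qed

lemma transition_0: "transition W A 0 a b = (if a = b then 1 else 0)"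
  unfolding transition_eq_exp_i_series by simp

lemma Im_transition_diag:
  assumes "u \<in> W" and "\<And>n. odd n \<Longrightarrow> mat_pow W A n u u = 0"
  shows "Im (transition W A t u u) = 0"
  unfolding transition_eq_exp_i_series
  using Im_exp_i_series[of "\<lambda>n. mat_pow W A n u u", OF abs_mat_pow_le[OF assms(1)]] assms(2) by blast

end

lemma exists_nonpos_if_antiderivative_bounded:
  fixes F G g :: "real \<Rightarrow> real"
  assumes "\<And>t. (F has_real_derivative G t) (at t)"
    and "\<And>t. (G has_real_derivative g t) (at t)"
    and "G 0 = 0" and "\<And>t. F t \<le> Y"
  shows "\<exists>t\<ge>0. g t \<le> 0"
proof (rule ccontr)
  assume "\<not> ?thesis"
  then have g_pos: "g t > 0" if "t \<ge> 0" for t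
    using that by force
  have G_increasing: "G a < G b" if "0 \<le> a" "a < b" for a b
    using g_pos that assms(2) by (intro DERIV_pos_imp_increasing[OF \<open>a < b\<close>]) force
  then have "G 1 > 0"
    using assms(3) by force
  define T where "T = 1 + (Y - F 1 + 1) / G 1"
  have "T > 1"
    unfolding T_def using \<open>G 1 > 0\<close> assms(4)[of 1] by simp
  then obtain z where z: "1 < z" "F T - F 1 = (T - 1) * G z"
    using MVT2[of 1 T F G] assms(1) by auto
  have "(T - 1) * G 1 \<le> (T - 1) * G z"
    using G_increasing[of 1 z] z(1) \<open>T > 1\<close> by simp
  moreover have "(T - 1) * G 1 = Y - F 1 + 1"
    unfolding T_def using \<open>G 1 > 0\<close> by simp
  ultimately show False
    using z(2) assms(4)[of T] by simp
qed

lemma not_sedentary_if_transition_vanishes: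
  assumes "s > 0" and "transition W A s u u = 0"
  shows "\<not> sedentary W A u \<and> not_sedentary W A u"
proof -
  have "(INF t\<in>{0<..}. norm (transition W A t u u)) = 0"
  proof (rule antisym)
    show "(INF t\<in>{0<..}. norm (transition W A t u u)) \<le> 0"
      using cINF_lower[of "\<lambda>t. norm (transition W A t u u)" "{0<..}" s] assms
      by (simp add: bdd_below_def) (meson norm_ge_zero)
  qed (auto intro: cINF_greatest)
  then show ?thesis
    unfolding sedentary_def not_sedentary_def by auto
qed

lemma sum_rotate3:
  "(\<Sum>a\<in>X. \<Sum>b\<in>Y. \<Sum>c\<in>Z. f a b c) = (\<Sum>c\<in>Z. \<Sum>b\<in>Y. \<Sum>a\<in>X. f a b c)"
proof -
  have "(\<Sum>a\<in>X. \<Sum>b\<in>Y. \<Sum>c\<in>Z. f a b c) = (\<Sum>b\<in>Y. \<Sum>a\<in>X. \<Sum>c\<in>Z. f a b c)"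
    by (rule sum.swap)
  also have "\<dots> = (\<Sum>b\<in>Y. \<Sum>c\<in>Z. \<Sum>a\<in>X. f a b c)"
    by (intro sum.cong refl) (rule sum.swap)
  also have "\<dots> = (\<Sum>c\<in>Z. \<Sum>b\<in>Y. \<Sum>a\<in>X. f a b c)"
    by (rule sum.swap)
  finally show ?thesis .
qed

definition transition_form :: "'a set \<Rightarrow> ('a \<Rightarrow> 'a \<Rightarrow> real) \<Rightarrow> ('a \<Rightarrow> real) \<Rightarrow> ('a \<Rightarrow> real) \<Rightarrow> real \<Rightarrow> complex"
  where "transition_form W A x y t = (\<Sum>a\<in>W. \<Sum>b\<in>W. of_real (x a) * transition W A t a b * of_real (y b))"

lemma transition_form_cong:
  assumes "\<And>a. a \<in> W \<Longrightarrow> x a = x' a" and "\<And>b. b \<in> W \<Longrightarrow> y b = y' b"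
  shows "transition_form W A x y t = transition_form W A x' y' t"
  unfolding transition_form_def using assms by simp

context
  fixes W :: "'a set" and A :: "'a \<Rightarrow> 'a \<Rightarrow> real"
  assumes finite: "finite W" and symmetric: "\<And>x y. A x y = A y x"
begin

lemma sum_norm_transition_column:
  assumes "b \<in> W"
  shows "(\<Sum>a\<in>W. (norm (transition W A t a b))\<^sup>2) = 1"
proof -
  define U where "U t a = transition W A t a b" for t a
  define N where "N t = (\<Sum>a\<in>W. U t a * cnj (U t a))" for t
  define D where "D t a = \<i> * (\<Sum>x\<in>W. of_real (A a x) * U t x)" for t a
  have "(N has_vector_derivative 0) (at t)" for t
  proof -
    define P where "P a x = of_real (A a x) * U t x * cnj (U t a)" for a x
    have "(N has_vector_derivative (\<Sum>a\<in>W. U t a * cnj (D t a) + D t a * cnj (U t a))) (at t)"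
      unfolding N_def D_def U_def
      by (intro has_vector_derivative_sum has_vector_derivative_mult has_vector_derivative_cnj
          transition_has_vector_derivative_left[OF finite])
    moreover have "U t a * cnj (D t a) = - \<i> * (\<Sum>x\<in>W. P x a)" for a
      unfolding D_def P_def by (simp add: sum_distrib_left symmetric[of a] mult_ac)
    moreover have "D t a * cnj (U t a) = \<i> * (\<Sum>x\<in>W. P a x)" for a
      unfolding D_def P_def by (simp add: sum_distrib_left sum_distrib_right mult.assoc)
    moreover have "(\<Sum>a\<in>W. \<Sum>x\<in>W. P x a) = (\<Sum>a\<in>W. \<Sum>x\<in>W. P a x)"
      by (rule sum.swap)
    ultimately show ?thesis
      by (simp add: sum_subtractf flip: sum_distrib_left)
  qed
  then obtain c where "\<And>t. N t = c"
    using has_vector_derivative_zero_constant[of UNIV N] by auto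
  then have "N t = N 0"
    by simp
  also have "N 0 = 1"
    unfolding N_def U_def transition_0[OF finite] using assms finite
    by (simp add: if_distrib[of cnj] if_distrib[of "\<lambda>z. z * _"] cong: if_cong)
  finally have "of_real (\<Sum>a\<in>W. (norm (U t a))\<^sup>2) = (1 :: complex)"
    unfolding N_def by (simp only: of_real_sum complex_norm_square)
  then show ?thesis
    unfolding U_def of_real_eq_1_iff .
qed

lemma norm_transition_le_1:
  assumes "a \<in> W" and "b \<in> W"
  shows "norm (transition W A t a b) \<le> 1"
proof -
  have "(norm (transition W A t a b))\<^sup>2 \<le> (\<Sum>a\<in>W. (norm (transition W A t a b))\<^sup>2)"
    using assms finite by (intro member_le_sum) auto
  then show ?thesis
    using sum_norm_transition_column[OF assms(2)] by (simp add: power_le_one_iff abs_le_square_iff[symmetric])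
qed

lemma norm_transition_form_le:
  "norm (transition_form W A x y t) \<le> (\<Sum>a\<in>W. \<bar>x a\<bar>) * (\<Sum>b\<in>W. \<bar>y b\<bar>)"
proof -
  have term_le: "norm (of_real (x a) * transition W A t a b * of_real (y b)) \<le> \<bar>x a\<bar> * \<bar>y b\<bar>"
    if "a \<in> W" "b \<in> W" for a b
  proof -
    have "norm (of_real (x a) * transition W A t a b * of_real (y b))
        = \<bar>x a\<bar> * norm (transition W A t a b) * \<bar>y b\<bar>"
      by (simp add: norm_mult)
    also have "\<dots> \<le> \<bar>x a\<bar> * 1 * \<bar>y b\<bar>"
      using norm_transition_le_1[OF that] by (intro mult_right_mono mult_left_mono) auto
    finally show ?thesis
      by simp
  qed
  have "norm (transition_form W A x y t)
      \<le> (\<Sum>a\<in>W. \<Sum>b\<in>W. norm (of_real (x a) * transition W A t a b * of_real (y b)))"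
    unfolding transition_form_def by (intro sum_norm_le norm_sum)
  also have "\<dots> \<le> (\<Sum>a\<in>W. \<Sum>b\<in>W. \<bar>x a\<bar> * \<bar>y b\<bar>)"
    using term_le by (intro sum_mono) auto
  finally show ?thesis
    by (simp add: sum_product)
qed

lemma transition_form_has_vector_derivative_left:
  "((transition_form W A x y) has_vector_derivative
     \<i> * transition_form W A (\<lambda>c. \<Sum>a\<in>W. A c a * x a) y t) (at t)"
proof -
  let ?U = "\<lambda>a b. transition W A t a b"
  have "((transition_form W A x y) has_vector_derivative
     (\<Sum>a\<in>W. \<Sum>b\<in>W. of_real (x a) * (\<i> * (\<Sum>c\<in>W. of_real (A a c) * ?U c b)) * of_real (y b))) (at t)"
    unfolding transition_form_def
    by (intro has_vector_derivative_sum has_vector_derivative_mult_left has_vector_derivative_mult_right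
        transition_has_vector_derivative_left[OF finite])
  moreover have "(\<Sum>a\<in>W. \<Sum>b\<in>W. of_real (x a) * (\<i> * (\<Sum>c\<in>W. of_real (A a c) * ?U c b)) * of_real (y b))
      = \<i> * (\<Sum>a\<in>W. \<Sum>b\<in>W. \<Sum>c\<in>W. of_real (x a * A a c) * ?U c b * of_real (y b))"
    unfolding sum_distrib_left sum_distrib_right
    by (intro sum.cong refl) (simp add: mult_ac)
  moreover have "(\<Sum>a\<in>W. \<Sum>b\<in>W. \<Sum>c\<in>W. of_real (x a * A a c) * ?U c b * of_real (y b))
      = (\<Sum>c\<in>W. \<Sum>b\<in>W. \<Sum>a\<in>W. of_real (x a * A a c) * ?U c b * of_real (y b))"
    by (rule sum_rotate3)
  moreover have "\<dots> = transition_form W A (\<lambda>c. \<Sum>a\<in>W. A c a * x a) y t"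
    unfolding transition_form_def of_real_sum sum_distrib_right
    by (intro sum.cong refl) (simp add: symmetric mult.commute)
  ultimately show ?thesis
    by (simp only:)
qed

lemma transition_form_has_vector_derivative_right:
  "((transition_form W A x y) has_vector_derivative
     \<i> * transition_form W A x (\<lambda>c. \<Sum>b\<in>W. A c b * y b) t) (at t)"
proof -
  let ?U = "\<lambda>a b. transition W A t a b"
  have "((transition_form W A x y) has_vector_derivative
     (\<Sum>a\<in>W. \<Sum>b\<in>W. of_real (x a) * (\<i> * (\<Sum>c\<in>W. of_real (A c b) * ?U a c)) * of_real (y b))) (at t)"
    unfolding transition_form_def
    by (intro has_vector_derivative_sum has_vector_derivative_mult_left has_vector_derivative_mult_right
        transition_has_vector_derivative_right[OF finite])
  moreover have "(\<Sum>a\<in>W. \<Sum>b\<in>W. of_real (x a) * (\<i> * (\<Sum>c\<in>W. of_real (A c b) * ?U a c)) * of_real (y b))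
      = \<i> * (\<Sum>a\<in>W. \<Sum>b\<in>W. \<Sum>c\<in>W. of_real (x a) * ?U a c * of_real (A c b * y b))"
    unfolding sum_distrib_left sum_distrib_right
    by (intro sum.cong refl) (simp add: mult_ac)
  moreover have "(\<Sum>a\<in>W. \<Sum>b\<in>W. \<Sum>c\<in>W. of_real (x a) * ?U a c * of_real (A c b * y b))
      = (\<Sum>a\<in>W. \<Sum>c\<in>W. \<Sum>b\<in>W. of_real (x a) * ?U a c * of_real (A c b * y b))"
    by (rule sum.cong[OF refl sum.swap])
  moreover have "\<dots> = transition_form W A x (\<lambda>c. \<Sum>b\<in>W. A c b * y b) t"
    unfolding transition_form_def of_real_sum sum_distrib_left ..
  ultimately show ?thesis
    by (simp only:)
qed

end

lemma transition_form_0: "finite W \<Longrightarrow> transition_form W A x y 0 = of_real (\<Sum>a\<in>W. x a * y a)"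
  unfolding transition_form_def transition_0
  by (simp add: if_distrib[of "\<lambda>z. _ * z"] if_distrib[of "\<lambda>z. z * _"] cong: if_cong)

lemma transition_form_indicator:
  assumes "finite W" and "u \<in> W"
  shows "transition_form W A (\<lambda>c. if c = u then 1 else 0) (\<lambda>c. if c = u then 1 else 0) t
    = transition W A t u u"
  unfolding transition_form_def using assms
  by (simp add: if_distrib[of of_real] if_distrib[of "\<lambda>z. _ * z"] if_distrib[of "\<lambda>z. z * _"] cong: if_cong)

lemma transition_diag_vanishes:
  assumes finite: "finite W" and symmetric: "\<And>x y. A x y = A y x"
    and "nonsingular W A" and "u \<in> W" and odd_powers: "\<And>n. odd n \<Longrightarrow> mat_pow W A n u u = 0"
  shows "\<exists>s>0. transition W A s u u = 0"
proof -
  obtain B where B: "\<forall>a\<in>W. \<forall>b\<in>W. (\<Sum>x\<in>W. A a x * B x b) = (if a = b then 1 else 0)"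
    using assms(3) unfolding nonsingular_def by blast
  define e where "e c = (if c = u then 1 else 0 :: real)" for c
  define y where "y b = B b u" for b
  have Ay: "(\<Sum>b\<in>W. A c b * y b) = e c" if "c \<in> W" for c
    using B that \<open>u \<in> W\<close> unfolding y_def e_def by auto
  define \<phi> where "\<phi> = transition_form W A y y"
  define \<psi> where "\<psi> t = \<i> * transition_form W A e y t" for t
  define h where "h t = transition W A t u u" for t
  have "(\<phi> has_vector_derivative \<psi> t) (at t)" for t
  proof -
    have "transition_form W A (\<lambda>c. \<Sum>a\<in>W. A c a * y a) y t = transition_form W A e y t"
      by (rule transition_form_cong) (simp_all add: Ay)
    with transition_form_has_vector_derivative_left[where W=W and A=A and x=y and y=y and t=t,
        OF finite symmetric]
    show ?thesis
      unfolding \<phi>_def \<psi>_def by (simp only:)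
  qed
  then have d\<phi>: "((\<lambda>t. - Re (\<phi> t)) has_real_derivative - Re (\<psi> t)) (at t)" for t
    using DERIV_minus[OF has_field_derivative_Re] by blast
  have "(\<psi> has_vector_derivative - h t) (at t)" for t
  proof -
    have "transition_form W A e (\<lambda>c. \<Sum>b\<in>W. A c b * y b) t = transition_form W A e e t"
      by (rule transition_form_cong) (simp_all add: Ay)
    also have "\<dots> = h t"
      unfolding e_def h_def by (rule transition_form_indicator[OF finite \<open>u \<in> W\<close>])
    finally have "\<i> * (\<i> * transition_form W A e (\<lambda>c. \<Sum>b\<in>W. A c b * y b) t) = - h t"
      by simp
    with has_vector_derivative_mult_right[OF transition_form_has_vector_derivative_right[
        where W=W and A=A and x=e and y=y and t=t, OF finite symmetric], of \<i>]
    show ?thesis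
      unfolding \<psi>_def by (simp only:)
  qed
  then have d\<psi>: "((\<lambda>t. - Re (\<psi> t)) has_real_derivative Re (h t)) (at t)" for t
    using DERIV_minus[OF has_field_derivative_Re] by fastforce
  have "Re (\<psi> 0) = 0"
    unfolding \<psi>_def transition_form_0[OF finite] by simp
  moreover have "- Re (\<phi> t) \<le> (\<Sum>a\<in>W. \<bar>y a\<bar>) * (\<Sum>b\<in>W. \<bar>y b\<bar>)" for t
    using abs_Re_le_cmod[of "\<phi> t"] norm_transition_form_le[where W=W and A=A and x=y and y=y and t=t, OF finite symmetric]
    unfolding \<phi>_def by linarith
  ultimately obtain t where "t \<ge> 0" and "Re (h t) \<le> 0"
    using exists_nonpos_if_antiderivative_bounded[OF d\<phi> d\<psi>] by auto
  moreover have "Re (h 0) = 1"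
    unfolding h_def transition_0[OF finite] by simp
  moreover have "continuous_on {0..t} h"
    unfolding h_def
    by (rule continuous_on_vector_derivative)
      (rule transition_has_vector_derivative_left[OF finite \<open>u \<in> W\<close>])
  then have "continuous_on {0..t} (\<lambda>t. Re (h t))"
    by (intro continuous_intros)
  ultimately obtain s where "0 \<le> s" and "Re (h s) = 0"
    using IVT2'[of "\<lambda>t. Re (h t)" t 0 0] by auto
  moreover have "Im (h s) = 0"
    unfolding h_def by (rule Im_transition_diag[OF finite \<open>u \<in> W\<close> odd_powers])
  ultimately have "s > 0" and "h s = 0"
    using \<open>Re (h 0) = 1\<close> complex_eq_iff[of "h s" 0] by (auto simp: less_le)
  then show ?thesis
    unfolding h_def by blast
qed

lemma nonsingular_imp_injective:
  assumes "finite W" and "nonsingular W A" and "\<forall>x\<in>W. (\<Sum>y\<in>W. A x y * Z y) = 0" and "u \<in> W"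
  shows "Z u = 0"
proof -
  obtain B where B: "\<forall>a\<in>W. \<forall>b\<in>W. (\<Sum>x\<in>W. B a x * A x b) = (if a = b then 1 else 0)"
    using assms(2) unfolding nonsingular_def by blast
  have "Z u = (\<Sum>v\<in>W. (if u = v then 1 else 0) * Z v)"
    using assms(1,4) by (simp add: if_distrib[of "\<lambda>z. z * _"] cong: if_cong)
  also have "\<dots> = (\<Sum>v\<in>W. (\<Sum>x\<in>W. B u x * A x v) * Z v)"
    using B assms(4) by (intro sum.cong refl) simp
  also have "\<dots> = (\<Sum>v\<in>W. \<Sum>x\<in>W. B u x * A x v * Z v)"
    by (simp add: sum_distrib_right)
  also have "\<dots> = (\<Sum>x\<in>W. B u x * (\<Sum>v\<in>W. A x v * Z v))"
    by (subst sum.swap) (simp add: sum_distrib_left mult.assoc)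
  also have "\<dots> = 0"
    using assms(3) by simp
  finally show ?thesis .
qed

lemma injective_imp_nonsingular:
  fixes A :: "'a \<Rightarrow> 'a \<Rightarrow> real"
  assumes "finite W"
    and injective: "\<And>Z. \<forall>x\<in>W. (\<Sum>y\<in>W. A x y * Z y) = 0 \<Longrightarrow> \<forall>y\<in>W. Z y = 0"
  shows "nonsingular W A"
proof -
  obtain xs where xs: "set xs = W" "distinct xs"
    using finite_distinct_list[OF assms(1)] by blast
  define n where "n = length xs"
  have bij: "bij_betw ((!) xs) {..<n} W"
    using bij_betw_nth[OF xs(2)] xs(1) n_def by simp
  define idx where "idx = the_inv_into {..<n} ((!) xs)"
  have idx_nth: "idx (xs ! j) = j" if "j < n" for j
    unfolding idx_def using bij that by (auto intro: the_inv_into_f_f simp: bij_betw_def)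
  have idx: "idx b < n" "xs ! idx b = b" if "b \<in> W" for b
    using that xs n_def idx_nth by (auto simp: in_set_conv_nth)
  have reindex: "(\<Sum>b\<in>W. f b) = (\<Sum>j\<in>{0..<n}. f (xs ! j))" for f :: "'a \<Rightarrow> real"
    using sum.reindex_bij_betw[OF bij, of f] by (simp add: atLeast0LessThan)
  define M where "M = mat n n (\<lambda>(i, j). A (xs ! i) (xs ! j))"
  have M: "M \<in> carrier_mat n n"
    unfolding M_def by simp
  have M_entry: "(M * N) $$ (idx a, idx b) = (\<Sum>x\<in>W. A a x * N $$ (idx x, idx b))"
    if "N \<in> carrier_mat n n" "a \<in> W" "b \<in> W" for N a b
    unfolding reindex using that idx idx_nth by (simp add: M_def scalar_prod_def)
  have entry_M: "(N * M) $$ (idx a, idx b) = (\<Sum>x\<in>W. N $$ (idx a, idx x) * A x b)"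
    if "N \<in> carrier_mat n n" "a \<in> W" "b \<in> W" for N a b
    unfolding reindex using that idx idx_nth by (simp add: M_def scalar_prod_def)
  have "det M \<noteq> 0"
  proof
    assume "det M = 0"
    then obtain v where v: "v \<in> carrier_vec n" "v \<noteq> 0\<^sub>v n" "M *\<^sub>v v = 0\<^sub>v n"
      using det_0_iff_vec_prod_zero[OF M] by blast
    have "\<forall>x\<in>W. (\<Sum>y\<in>W. A x y * vec_index v (idx y)) = 0"
    proof
      fix x assume "x \<in> W"
      have "(\<Sum>y\<in>W. A x y * vec_index v (idx y)) = vec_index (M *\<^sub>v v) (idx x)"
        unfolding reindex using v(1) idx[OF \<open>x \<in> W\<close>] idx_nth by (simp add: M_def scalar_prod_def)
      then show "(\<Sum>y\<in>W. A x y * vec_index v (idx y)) = 0"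
        using v(3) idx[OF \<open>x \<in> W\<close>] by simp
    qed
    then have "\<forall>y\<in>W. vec_index v (idx y) = 0"
      by (rule injective)
    then have "v = 0\<^sub>v n"
      using v(1) xs n_def idx_nth by (intro eq_vecI) (auto, metis nth_mem)
    then show False
      using v(2) by simp
  qed
  then have "M \<in> Units (ring_mat TYPE(real) n ())"
    by (rule det_non_zero_imp_unit[OF M])
  then obtain N where N: "N \<in> carrier_mat n n" "N * M = 1\<^sub>m n" "M * N = 1\<^sub>m n"
    unfolding Units_def ring_mat_simps by auto
  have "idx a = idx b \<longleftrightarrow> a = b" if "a \<in> W" "b \<in> W" for a b
    using idx that by metis
  then show ?thesis
    unfolding nonsingular_def
    using N idx M_entry[OF N(1)] entry_M[OF N(1)]
    by (intro exI[of _ "\<lambda>a b. N $$ (idx a, idx b)"]) (auto simp: mult.commute)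
qed

lemma nonsingular_iff_injective:
  fixes A :: "'a \<Rightarrow> 'a \<Rightarrow> real"
  assumes "finite W"
  shows "nonsingular W A \<longleftrightarrow> (\<forall>Z. (\<forall>x\<in>W. (\<Sum>y\<in>W. A x y * Z y) = 0) \<longrightarrow> (\<forall>y\<in>W. Z y = 0))"
  using nonsingular_imp_injective[OF assms] injective_imp_nonsingular[OF assms] by blast

definition alternating :: "('v \<Rightarrow> 'v \<Rightarrow> real) \<Rightarrow> ('v \<Rightarrow> real) \<Rightarrow> bool" where
  "alternating w z \<longleftrightarrow> (\<forall>a b. w a b \<noteq> 0 \<longrightarrow> z b = - z a)"

definition balanced :: "'v set \<Rightarrow> ('v \<Rightarrow> 'v \<Rightarrow> real) \<Rightarrow> ('v set \<Rightarrow> real) \<Rightarrow> bool" where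
  "balanced V w \<zeta> \<longleftrightarrow> (\<forall>v\<in>V. (\<Sum>x\<in>V. w v x * \<zeta> {v, x}) = 0)"

definition closed_walk :: "('v \<Rightarrow> 'v \<Rightarrow> real) \<Rightarrow> 'v list \<Rightarrow> bool" where
  "closed_walk w C \<longleftrightarrow> C \<noteq> [] \<and> successively (\<lambda>a b. w a b \<noteq> 0) C \<and> w (last C) (hd C) \<noteq> 0"

lemma alternating_abs_eq:
  assumes "alternating w z" and "(u, v) \<in> {(a, b). w a b \<noteq> 0}\<^sup>*"
  shows "\<bar>z u\<bar> = \<bar>z v\<bar>"
  using assms(2) by induction (use assms(1) in \<open>auto simp: alternating_def\<close>)

lemma alternating_vanishes:
  assumes "connected_graph V w" and "alternating w z" and "u \<in> V" and "z u = 0" and "v \<in> V"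
  shows "z v = 0"
  using alternating_abs_eq[OF assms(2), of u v] assms unfolding connected_graph_def by auto

lemma unicyclic_cycle_edges_eq:
  assumes "unicyclic V w" and "is_cycle V w C" and "is_cycle V w D"
  shows "cycle_edges C = cycle_edges D"
proof -
  have "card {cycle_edges cs | cs. is_cycle V w cs} = 1"
    using assms(1) unfolding unicyclic_def by simp
  then obtain E where "{cycle_edges cs | cs. is_cycle V w cs} = {E}"
    by (rule card_1_singletonE)
  then show ?thesis
    using assms(2,3) by blast
qed

lemma unicyclic_has_cycle:
  assumes "unicyclic V w"
  shows "\<exists>C. is_cycle V w C"
proof -
  have "card {cycle_edges cs | cs. is_cycle V w cs} = 1"
    using assms unfolding unicyclic_def by simp
  then have "{cycle_edges cs | cs. is_cycle V w cs} \<noteq> {}"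
    by force
  then show ?thesis
    by blast
qed

lemma cycle_edges_nth: "i < length C \<Longrightarrow> {C ! i, C ! ((i + 1) mod length C)} \<in> cycle_edges C"
  unfolding cycle_edges_def by blast

lemma cycle_edges_first:
  assumes "2 \<le> length C"
  shows "{C ! 0, C ! 1} \<in> cycle_edges C"
proof -
  have "(0 + 1) mod length C = 1"
    using assms by simp
  moreover have "0 < length C" and "C \<noteq> []"
    using assms by auto
  ultimately show ?thesis
    using cycle_edges_nth[of 0 C] by simp
qed

lemma cycle_edges_last: "C \<noteq> [] \<Longrightarrow> {last C, hd C} \<in> cycle_edges C"
  using cycle_edges_nth[of "length C - 1" C] by (simp add: last_conv_nth hd_conv_nth)

lemma cycle_edges_subset: "e \<in> cycle_edges C \<Longrightarrow> e \<subseteq> set C"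
  unfolding cycle_edges_def by (auto intro!: nth_mem mod_less_divisor)

lemma cyclic_successors_iff:
  assumes "xs \<noteq> []"
  shows "(\<forall>i<length xs. R (xs ! i) (xs ! ((i + 1) mod length xs)))
    \<longleftrightarrow> successively R xs \<and> R (last xs) (hd xs)"
proof -
  let ?n = "length xs"
  have last: "last xs = xs ! (?n - 1)" and hd: "hd xs = xs ! 0"
    using assms by (simp_all add: last_conv_nth hd_conv_nth)
  have "(\<forall>i<?n. R (xs ! i) (xs ! ((i + 1) mod ?n)))
    \<longleftrightarrow> (\<forall>i. Suc i < ?n \<longrightarrow> R (xs ! i) (xs ! Suc i)) \<and> R (xs ! (?n - 1)) (xs ! 0)"
  proof (intro iffI conjI allI impI)
    fix i assume cyclic: "\<forall>i<?n. R (xs ! i) (xs ! ((i + 1) mod ?n))" and "Suc i < ?n"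
    then show "R (xs ! i) (xs ! Suc i)"
      using cyclic[rule_format, of i] by simp
  next
    assume cyclic: "\<forall>i<?n. R (xs ! i) (xs ! ((i + 1) mod ?n))"
    have "?n - 1 < ?n" and "(?n - 1 + 1) mod ?n = 0"
      using assms by simp_all
    then show "R (xs ! (?n - 1)) (xs ! 0)"
      using cyclic[rule_format, of "?n - 1"] by simp
  next
    fix i assume steps: "(\<forall>i. Suc i < ?n \<longrightarrow> R (xs ! i) (xs ! Suc i)) \<and> R (xs ! (?n - 1)) (xs ! 0)"
      and "i < ?n"
    show "R (xs ! i) (xs ! ((i + 1) mod ?n))"
    proof (cases "Suc i < ?n")
      case False
      then have "i + 1 = ?n"
        using \<open>i < ?n\<close> by simp
      then have "i = ?n - 1" and "(i + 1) mod ?n = 0"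
        by auto
      then show ?thesis
        using steps by simp
    qed (use steps in simp)
  qed
  then show ?thesis
    unfolding successively_conv_nth last hd .
qed

lemma cycle_edges_rotate: "cycle_edges (rotate k C) \<subseteq> cycle_edges C"
proof
  fix e assume "e \<in> cycle_edges (rotate k C)"
  then obtain i where i: "i < length C"
    and e: "e = {rotate k C ! i, rotate k C ! ((i + 1) mod length C)}"
    unfolding cycle_edges_def by auto
  define j where "j = (k + i) mod length C"
  have "j < length C"
    unfolding j_def using i by (intro mod_less_divisor) linarith
  have "rotate k C ! i = C ! j"
    unfolding j_def using i by (rule nth_rotate)
  moreover have "rotate k C ! ((i + 1) mod length C) = C ! ((k + (i + 1) mod length C) mod length C)"
    using i by (intro nth_rotate mod_less_divisor) linarith
  moreover have "(k + (i + 1) mod length C) mod length C = (j + 1) mod length C"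
    unfolding j_def by (simp add: mod_simps add.assoc)
  ultimately show "e \<in> cycle_edges C"
    unfolding e using cycle_edges_nth[OF \<open>j < length C\<close>] by simp
qed

locale weighted_graph =
  fixes V :: "'v set" and w :: "'v \<Rightarrow> 'v \<Rightarrow> real"
  assumes wgraph: "wgraph V w"
begin

lemma finite_vertices: "finite V"
  using wgraph unfolding wgraph_def by simp

lemma weight_sym: "w a b = w b a"
  using wgraph unfolding wgraph_def by simp

lemma weight_nonzero_imp: "w a b \<noteq> 0 \<Longrightarrow> a \<in> V \<and> b \<in> V \<and> a \<noteq> b"
  using wgraph unfolding wgraph_def by auto

lemma edges_iff: "e \<in> edges V w \<longleftrightarrow> (\<exists>a b. e = {a, b} \<and> w a b \<noteq> 0)"
  unfolding edges_def using weight_nonzero_imp by blast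

lemma doubleton_in_edges_iff: "{a, b} \<in> edges V w \<longleftrightarrow> w a b \<noteq> 0"
  unfolding edges_iff using weight_sym by (auto simp: doubleton_eq_iff)

lemma finite_edges: "finite (edges V w)"
proof -
  have "edges V w \<subseteq> (\<lambda>(a, b). {a, b}) ` (V \<times> V)"
    unfolding edges_def by auto
  then show ?thesis
    using finite_vertices by (auto intro: finite_subset)
qed

lemma subdiv_weight_edge: "w a b \<noteq> 0 \<Longrightarrow> subdiv_weight V w (Inl a) (Inr {a, b}) = w a b"
proof -
  assume "w a b \<noteq> 0"
  then have "{a, b} - {a} = {b}"
    using weight_nonzero_imp by auto
  then show ?thesis
    using \<open>w a b \<noteq> 0\<close> doubleton_in_edges_iff by simp
qed

lemma sum_subdiv_verts:
  "(\<Sum>y\<in>subdiv_verts V w. f y) = (\<Sum>v\<in>V. f (Inl v)) + (\<Sum>e\<in>edges V w. f (Inr e))"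
  unfolding subdiv_verts_def
  by (subst sum.union_disjoint) (auto simp: finite_vertices finite_edges sum.reindex)

lemma subdiv_row_vertex:
  assumes "v \<in> V"
  shows "(\<Sum>y\<in>subdiv_verts V w. subdiv_weight V w (Inl v) y * Z y) = (\<Sum>x\<in>V. w v x * Z (Inr {v, x}))"
proof -
  let ?N = "{x\<in>V. w v x \<noteq> 0}"
  have "(\<Sum>x\<in>V. w v x * Z (Inr {v, x})) = (\<Sum>x\<in>?N. w v x * Z (Inr {v, x}))"
    by (rule sum.mono_neutral_right) (auto simp: finite_vertices)
  also have "\<dots> = (\<Sum>x\<in>?N. subdiv_weight V w (Inl v) (Inr {v, x}) * Z (Inr {v, x}))"
    by (rule sum.cong[OF refl]) (simp add: subdiv_weight_edge del: subdiv_weight.simps)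
  also have "\<dots> = (\<Sum>e\<in>(\<lambda>x. {v, x}) ` ?N. subdiv_weight V w (Inl v) (Inr e) * Z (Inr e))"
    by (rule sum.reindex[symmetric, unfolded comp_def]) (auto simp: inj_on_def doubleton_eq_iff)
  also have "\<dots> = (\<Sum>e\<in>edges V w. subdiv_weight V w (Inl v) (Inr e) * Z (Inr e))"
  proof (rule sum.mono_neutral_left[OF finite_edges])
    show "(\<lambda>x. {v, x}) ` ?N \<subseteq> edges V w"
      using doubleton_in_edges_iff by auto
    show "\<forall>e\<in>edges V w - (\<lambda>x. {v, x}) ` ?N. subdiv_weight V w (Inl v) (Inr e) * Z (Inr e) = 0"
    proof
      fix e assume e: "e \<in> edges V w - (\<lambda>x. {v, x}) ` ?N"
      have "v \<notin> e"
      proof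
        assume "v \<in> e"
        then obtain x where "e = {v, x}"
          using e by (auto simp: edges_iff)
        then have "x \<in> ?N"
          using e doubleton_in_edges_iff weight_nonzero_imp by auto
        then show False
          using e \<open>e = {v, x}\<close> by auto
      qed
      then show "subdiv_weight V w (Inl v) (Inr e) * Z (Inr e) = 0"
        by simp
    qed
  qed
  finally show ?thesis
    unfolding sum_subdiv_verts by simp
qed

lemma subdiv_row_edge:
  assumes "w a b \<noteq> 0"
  shows "(\<Sum>y\<in>subdiv_verts V w. subdiv_weight V w (Inr {a, b}) y * Z y) = w a b * (Z (Inl a) + Z (Inl b))"
proof -
  have ab: "a \<in> V" "b \<in> V" "a \<noteq> b"
    using weight_nonzero_imp[OF assms] by auto
  have "subdiv_weight V w (Inr {a, b}) (Inl a) = w a b"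
    using subdiv_weight_edge[OF assms] by simp
  moreover have "subdiv_weight V w (Inr {a, b}) (Inl b) = w a b"
    using subdiv_weight_edge[of b a] assms weight_sym by (simp add: insert_commute)
  moreover have "(\<Sum>v\<in>V. subdiv_weight V w (Inr {a, b}) (Inl v) * Z (Inl v))
      = (\<Sum>v\<in>{a, b}. subdiv_weight V w (Inr {a, b}) (Inl v) * Z (Inl v))"
    using ab by (intro sum.mono_neutral_right) (auto simp: finite_vertices)
  ultimately show ?thesis
    unfolding sum_subdiv_verts using ab by (simp add: algebra_simps)
qed

lemma subdiv_kernel_iff:
  "(\<forall>x\<in>subdiv_verts V w. (\<Sum>y\<in>subdiv_verts V w. subdiv_weight V w x y * Z y) = 0)
    \<longleftrightarrow> alternating w (\<lambda>v. Z (Inl v)) \<and> balanced V w (\<lambda>e. Z (Inr e))"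
proof -
  have "(\<forall>e\<in>edges V w. (\<Sum>y\<in>subdiv_verts V w. subdiv_weight V w (Inr e) y * Z y) = 0)
      \<longleftrightarrow> (\<forall>a b. w a b \<noteq> 0 \<longrightarrow> w a b * (Z (Inl a) + Z (Inl b)) = 0)"
  proof (intro iffI allI impI ballI)
    fix a b assume rows: "\<forall>e\<in>edges V w. (\<Sum>y\<in>subdiv_verts V w. subdiv_weight V w (Inr e) y * Z y) = 0"
      and "w a b \<noteq> 0"
    then have "{a, b} \<in> edges V w"
      by (simp add: doubleton_in_edges_iff)
    then have "(\<Sum>y\<in>subdiv_verts V w. subdiv_weight V w (Inr {a, b}) y * Z y) = 0"
      by (rule bspec[OF rows])
    then show "w a b * (Z (Inl a) + Z (Inl b)) = 0"
      unfolding subdiv_row_edge[OF \<open>w a b \<noteq> 0\<close>] .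
  next
    fix e assume "\<forall>a b. w a b \<noteq> 0 \<longrightarrow> w a b * (Z (Inl a) + Z (Inl b)) = 0" and "e \<in> edges V w"
    then show "(\<Sum>y\<in>subdiv_verts V w. subdiv_weight V w (Inr e) y * Z y) = 0"
      unfolding edges_iff using subdiv_row_edge by auto
  qed
  also have "\<dots> \<longleftrightarrow> alternating w (\<lambda>v. Z (Inl v))"
    unfolding alternating_def by (auto simp: add_eq_0_iff)
  finally have "(\<forall>e\<in>edges V w. (\<Sum>y\<in>subdiv_verts V w. subdiv_weight V w (Inr e) y * Z y) = 0)
      \<longleftrightarrow> alternating w (\<lambda>v. Z (Inl v))" .
  moreover have "(\<forall>v\<in>V. (\<Sum>y\<in>subdiv_verts V w. subdiv_weight V w (Inl v) y * Z y) = 0)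
      \<longleftrightarrow> balanced V w (\<lambda>e. Z (Inr e))"
    unfolding balanced_def using subdiv_row_vertex by simp
  ultimately show ?thesis
    unfolding subdiv_verts_def by blast
qed

lemma nonsingular_subdiv_iff:
  "nonsingular (subdiv_verts V w) (subdiv_weight V w) \<longleftrightarrow>
     (\<forall>z. alternating w z \<longrightarrow> (\<forall>v\<in>V. z v = 0)) \<and>
     (\<forall>\<zeta>. balanced V w \<zeta> \<longrightarrow> (\<forall>e\<in>edges V w. \<zeta> e = 0))"
proof -
  have finite: "finite (subdiv_verts V w)"
    unfolding subdiv_verts_def using finite_vertices finite_edges by simp
  have "alternating w (\<lambda>_. 0)" and "balanced V w (\<lambda>_. 0)"
    unfolding alternating_def balanced_def by simp_all
  show ?thesis
    unfolding nonsingular_iff_injective[OF finite] subdiv_kernel_iff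
  proof (intro iffI conjI allI impI ballI)
    assume injective: "\<forall>Z. alternating w (\<lambda>v. Z (Inl v)) \<and> balanced V w (\<lambda>e. Z (Inr e))
      \<longrightarrow> (\<forall>y\<in>subdiv_verts V w. Z y = 0)"
    fix z v assume "alternating w z" and "v \<in> V"
    then have "\<forall>y\<in>subdiv_verts V w. case_sum z (\<lambda>_. 0) y = 0"
      using injective \<open>balanced V w (\<lambda>_. 0)\<close> by simp
    then show "z v = 0"
      using \<open>v \<in> V\<close> unfolding subdiv_verts_def by force
  next
    assume injective: "\<forall>Z. alternating w (\<lambda>v. Z (Inl v)) \<and> balanced V w (\<lambda>e. Z (Inr e))
      \<longrightarrow> (\<forall>y\<in>subdiv_verts V w. Z y = 0)"
    fix \<zeta> e assume "balanced V w \<zeta>" and "e \<in> edges V w"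
    then have "\<forall>y\<in>subdiv_verts V w. case_sum (\<lambda>_. 0) \<zeta> y = 0"
      using injective \<open>alternating w (\<lambda>_. 0)\<close> by simp
    then show "\<zeta> e = 0"
      using \<open>e \<in> edges V w\<close> unfolding subdiv_verts_def by force
  next
    fix Z y
    assume "(\<forall>z. alternating w z \<longrightarrow> (\<forall>v\<in>V. z v = 0)) \<and>
      (\<forall>\<zeta>. balanced V w \<zeta> \<longrightarrow> (\<forall>e\<in>edges V w. \<zeta> e = 0))"
      and "alternating w (\<lambda>v. Z (Inl v)) \<and> balanced V w (\<lambda>e. Z (Inr e))"
      and "y \<in> subdiv_verts V w"
    then have "\<forall>v\<in>V. Z (Inl v) = 0" and "\<forall>e\<in>edges V w. Z (Inr e) = 0"
      by auto
    with \<open>y \<in> subdiv_verts V w\<close> show "Z y = 0"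
      unfolding subdiv_verts_def by auto
  qed
qed

end

lemma successively_take: "successively P xs \<Longrightarrow> successively P (take n xs)"
  using successively_append_iff[of P "take n xs" "drop n xs"] by simp

lemma successively_drop: "successively P xs \<Longrightarrow> successively P (drop n xs)"
  using successively_append_iff[of P "take n xs" "drop n xs"] by simp

lemma walk_if_rtrancl:
  assumes "(u, v) \<in> {(a, b). w a b \<noteq> 0}\<^sup>*"
  shows "\<exists>P. P \<noteq> [] \<and> successively (\<lambda>a b. w a b \<noteq> 0) P \<and> hd P = u \<and> last P = v"
  using assms
proof (induction rule: rtrancl_induct)
  case base
  show ?case
    by (rule exI[of _ "[u]"]) simp
next
  case (step y z)
  then obtain P where "P \<noteq> []" "successively (\<lambda>a b. w a b \<noteq> 0) P" "hd P = u" "last P = y"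
    by blast
  with step.hyps(2) show ?case
    by (intro exI[of _ "P @ [z]"]) (simp add: successively_append_iff)
qed

context weighted_graph
begin

lemma set_subset_if_closed_walk:
  assumes "closed_walk w C"
  shows "set C \<subseteq> V"
proof
  fix x assume "x \<in> set C"
  then obtain i where "i < length C" and "x = C ! i"
    by (auto simp: in_set_conv_nth)
  moreover have "\<forall>i<length C. w (C ! i) (C ! ((i + 1) mod length C)) \<noteq> 0"
    using assms cyclic_successors_iff[of C "\<lambda>a b. w a b \<noteq> 0"] unfolding closed_walk_def by blast
  ultimately show "x \<in> V"
    using weight_nonzero_imp by blast
qed

lemma is_cycle_iff_closed_walk:
  "is_cycle V w C \<longleftrightarrow> closed_walk w C \<and> distinct C \<and> 3 \<le> length C"
proof
  assume "is_cycle V w C"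
  then have "C \<noteq> []"
    unfolding is_cycle_def by auto
  with \<open>is_cycle V w C\<close> show "closed_walk w C \<and> distinct C \<and> 3 \<le> length C"
    using cyclic_successors_iff[of C "\<lambda>a b. w a b \<noteq> 0"]
    unfolding is_cycle_def closed_walk_def by blast
next
  assume "closed_walk w C \<and> distinct C \<and> 3 \<le> length C"
  then show "is_cycle V w C"
    using cyclic_successors_iff[of C "\<lambda>a b. w a b \<noteq> 0"] set_subset_if_closed_walk
    unfolding is_cycle_def closed_walk_def by auto
qed

lemma cycle_edges_subset_edges:
  assumes "is_cycle V w C"
  shows "cycle_edges C \<subseteq> edges V w"
  using assms unfolding is_cycle_def cycle_edges_def by (auto simp: doubleton_in_edges_iff)

lemma is_cycle_rotate:
  assumes "is_cycle V w C"
  shows "is_cycle V w (rotate k C)"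
  unfolding is_cycle_def
proof (intro conjI allI impI)
  fix i assume "i < length (rotate k C)"
  then have i: "i < length C"
    by simp
  define j where "j = (k + i) mod length C"
  have "j < length C"
    unfolding j_def using i by (intro mod_less_divisor) linarith
  have "rotate k C ! i = C ! j"
    unfolding j_def using i by (rule nth_rotate)
  moreover have "rotate k C ! ((i + 1) mod length C) = C ! ((k + (i + 1) mod length C) mod length C)"
    using i by (intro nth_rotate mod_less_divisor) linarith
  moreover have "(k + (i + 1) mod length C) mod length C = (j + 1) mod length C"
    unfolding j_def by (simp add: mod_simps add.assoc)
  ultimately show "w (rotate k C ! i) (rotate k C ! ((i + 1) mod length (rotate k C))) \<noteq> 0"
    using assms \<open>j < length C\<close> unfolding is_cycle_def by simp
qed (use assms in \<open>auto simp: is_cycle_def\<close>)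

lemma odd_closed_walk_imp_odd_cycle:
  assumes "closed_walk w C" and "odd (length C)"
  shows "\<exists>D. is_cycle V w D \<and> odd (length D)"
  using assms
proof (induction "length C" arbitrary: C rule: less_induct)
  case less
  have walk: "successively (\<lambda>a b. w a b \<noteq> 0) C" and "C \<noteq> []"
    using less.prems(1) unfolding closed_walk_def by auto
  show ?case
  proof (cases "distinct C")
    case True
    have "length C \<noteq> 1"
    proof
      assume "length C = 1"
      then obtain x where "C = [x]"
        by (auto simp: length_Suc_conv)
      then show False
        using less.prems(1) weight_nonzero_imp unfolding closed_walk_def by auto
    qed
    then have "3 \<le> length C"
      using less.prems(2) \<open>C \<noteq> []\<close> by presburger
    then show ?thesis
      using True less.prems is_cycle_iff_closed_walk by blast
  next
    case False
    then obtain i j where ij: "i < j" "j < length C" "C ! i = C ! j"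
      by (metis distinct_conv_nth linorder_neqE_nat)
    define C1 where "C1 = drop i (take j C)"
    define C2 where "C2 = take i C @ drop j C"
    have "closed_walk w C1"
      unfolding closed_walk_def
    proof (intro conjI)
      show "C1 \<noteq> []"
        unfolding C1_def using ij by simp
      show "successively (\<lambda>a b. w a b \<noteq> 0) C1"
        unfolding C1_def by (intro successively_drop successively_take walk)
      have "last C1 = C ! (j - 1)" and "hd C1 = C ! j"
        unfolding C1_def using ij \<open>C1 \<noteq> []\<close>[unfolded C1_def]
        by (simp_all add: last_conv_nth hd_conv_nth)
      then show "w (last C1) (hd C1) \<noteq> 0"
        using successively_nth[OF walk, of "j - 1"] ij by simp
    qed
    moreover have "closed_walk w C2"
      unfolding closed_walk_def
    proof (intro conjI)
      show "C2 \<noteq> []"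
        unfolding C2_def using ij by simp
      have "w (C ! (i - 1)) (C ! j) \<noteq> 0" if "0 < i"
        using successively_nth[OF walk, of "i - 1"] ij that by simp
      then show "successively (\<lambda>a b. w a b \<noteq> 0) C2"
        unfolding C2_def using ij
        by (auto simp: successively_append_iff successively_take successively_drop walk
            last_conv_nth hd_drop_conv_nth)
      have "last C2 = last C"
        unfolding C2_def using ij by simp
      moreover have "hd C2 = hd C"
        unfolding C2_def using ij \<open>C \<noteq> []\<close> by (cases "i = 0") (auto simp: hd_drop_conv_nth hd_conv_nth nth_append)
      ultimately show "w (last C2) (hd C2) \<noteq> 0"
        using less.prems(1) unfolding closed_walk_def by simp
    qed
    moreover have "length C1 = j - i" and "length C2 = length C - (j - i)"
      unfolding C1_def C2_def using ij by auto
    then have "length C1 < length C" and "length C2 < length C"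
      using ij by auto
    moreover have "odd (length C1) \<or> odd (length C2)"
      using less.prems(2) ij \<open>length C1 = j - i\<close> \<open>length C2 = length C - (j - i)\<close> by auto
    ultimately show ?thesis
      using less.hyps by blast
  qed
qed

lemma odd_cycle_if_not_bipartite:
  assumes "connected_graph V w" and "\<not> bipartite V w"
  shows "\<exists>D. is_cycle V w D \<and> odd (length D)"
proof -
  obtain r where "r \<in> V"
    using assms(1) unfolding connected_graph_def by auto
  define walk_to where "walk_to v P \<longleftrightarrow>
    P \<noteq> [] \<and> successively (\<lambda>a b. w a b \<noteq> 0) P \<and> hd P = r \<and> last P = v" for v P
  have walk_exists: "\<exists>P. walk_to v P" if "v \<in> V" for v
  proof -
    have "(r, v) \<in> {(a, b). w a b \<noteq> 0}\<^sup>*"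
      using assms(1) \<open>r \<in> V\<close> that unfolding connected_graph_def by blast
    from walk_if_rtrancl[OF this] show ?thesis
      unfolding walk_to_def .
  qed
  define f where "f v \<longleftrightarrow> (\<exists>P. walk_to v P \<and> even (length P))" for v
  have "\<exists>a\<in>V. \<exists>b\<in>V. w a b \<noteq> 0 \<and> f a = f b"
  proof (rule ccontr)
    assume "\<not> ?thesis"
    then have "bipartite V w"
      unfolding bipartite_def by (intro exI[of _ f]) auto
    with assms(2) show False ..
  qed
  then obtain a b where "a \<in> V" "b \<in> V" "w a b \<noteq> 0" and "f a = f b"
    by blast
  obtain P Q' where P: "walk_to a P" and Q': "walk_to b Q'" and even: "even (length P + length Q')"
  proof (cases "f a")
    case True
    then obtain P Q' where "walk_to a P" "even (length P)" "walk_to b Q'" "even (length Q')"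
      using \<open>f a = f b\<close> unfolding f_def by blast
    then show ?thesis
      using that by simp
  next
    case False
    obtain P Q' where "walk_to a P" "walk_to b Q'"
      using walk_exists \<open>a \<in> V\<close> \<open>b \<in> V\<close> by blast
    moreover have "odd (length P)" and "odd (length Q')"
      using False \<open>f a = f b\<close> calculation unfolding f_def by blast+
    ultimately show ?thesis
      using that by simp
  qed
  obtain q Q where Q: "walk_to b (q # Q)" and "Q' = q # Q"
    using Q' unfolding walk_to_def by (cases Q') auto
  define C where "C = P @ rev Q"
  have "closed_walk w C"
  proof (cases "Q = []")
    case True
    then show ?thesis
      using P Q \<open>w a b \<noteq> 0\<close> unfolding C_def closed_walk_def walk_to_def by auto
  next
    case False
    have "successively (\<lambda>a b. w a b \<noteq> 0) Q"
      using Q False unfolding walk_to_def by (simp add: successively_Cons)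
    then have "successively (\<lambda>a b. w b a \<noteq> 0) Q"
      by (rule successively_mono) (simp add: weight_sym)
    then have "successively (\<lambda>a b. w a b \<noteq> 0) (rev Q)"
      by simp
    moreover have "w q (hd Q) \<noteq> 0"
      using Q False unfolding walk_to_def by (auto simp: successively_Cons)
    then have "w (hd Q) q \<noteq> 0"
      using weight_sym[of "hd Q" q] by simp
    ultimately show ?thesis
      using P Q False \<open>w a b \<noteq> 0\<close> unfolding C_def closed_walk_def walk_to_def
      by (simp add: successively_append_iff hd_rev last_rev)
  qed
  moreover have "odd (length C)"
    unfolding C_def using even \<open>Q' = q # Q\<close> by simp
  ultimately show ?thesis
    by (rule odd_closed_walk_imp_odd_cycle)
qed

end

definition path_in :: "'v set set \<Rightarrow> 'v list \<Rightarrow> bool" where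
  "path_in S P \<longleftrightarrow> distinct P \<and> successively (\<lambda>a b. {a, b} \<in> S) P"

lemma successively_neighbour:
  assumes "successively R xs" and "2 \<le> length xs" and "x \<in> set xs"
  shows "\<exists>y. R x y \<or> R y x"
  using assms
proof (induction xs rule: induct_list012)
  case (3 a b xs)
  then show ?case
    by (cases "xs = []") (auto simp: Suc_le_eq)
qed auto

context weighted_graph
begin

lemma set_subset_if_walk:
  assumes "successively (\<lambda>a b. w a b \<noteq> 0) P" and "2 \<le> length P"
  shows "set P \<subseteq> V"
  using successively_neighbour[OF assms] weight_nonzero_imp by blast

lemma cycle_through_ear:
  assumes D: "is_cycle V w D"
    and P: "distinct P" "2 \<le> length P" "successively (\<lambda>a b. w a b \<noteq> 0) P"
    and ends: "hd P \<in> set D" "last P \<in> set D" and inner: "set P \<inter> set D \<subseteq> {hd P, last P}"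
    and new_edge: "{P ! 0, P ! 1} \<notin> cycle_edges D"
  shows "\<exists>L. is_cycle V w L \<and> {P ! 0, P ! 1} \<in> cycle_edges L"
proof -
  have "P \<noteq> []"
    using P(2) by auto
  obtain k where "k < length D" and "D ! k = hd P"
    using ends(1) by (auto simp: in_set_conv_nth)
  define D' where "D' = rotate k D"
  have "closed_walk w D'" and "distinct D'" and "3 \<le> length D'"
    using is_cycle_rotate[OF D] is_cycle_iff_closed_walk unfolding D'_def by auto
  have "D' \<noteq> []"
    using \<open>3 \<le> length D'\<close> by auto
  have len: "length D' = length D" and set: "set D' = set D"
    unfolding D'_def by simp_all
  have walk': "successively (\<lambda>a b. w a b \<noteq> 0) D'"
    using \<open>closed_walk w D'\<close> unfolding closed_walk_def by simp
  have hd': "D' ! 0 = hd P"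
  proof -
    have "D \<noteq> []"
      using \<open>k < length D\<close> by auto
    then show ?thesis
      unfolding D'_def using nth_rotate[of 0 D k] \<open>k < length D\<close> \<open>D ! k = hd P\<close> by simp
  qed
  have "last P \<in> set D'"
    using ends(2) set by simp
  then obtain c where c: "c < length D'" "D' ! c = last P"
    by (auto simp: in_set_conv_nth)
  have "hd P \<noteq> last P"
    using P(1,2) by (cases P) auto
  then have "c \<noteq> 0"
    using c(2) hd' by (metis)
  define R where "R = drop (Suc c) D'"
  define L where "L = P @ R"
  have "last L = last D'"
  proof (cases "R = []")
    case True
    then have "c = length D' - 1"
      unfolding R_def using c by simp
    then show ?thesis
      unfolding L_def using True c \<open>D' \<noteq> []\<close> by (simp add: last_conv_nth)
  qed (simp add: L_def R_def)
  have "closed_walk w L"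
    unfolding closed_walk_def
  proof (intro conjI)
    show "L \<noteq> []"
      unfolding L_def using P(2) by auto
    have "w (last P) (hd R) \<noteq> 0" if "R \<noteq> []"
      using that c successively_nth[OF walk', of c] unfolding R_def by (simp add: hd_drop_conv_nth)
    then show "successively (\<lambda>a b. w a b \<noteq> 0) L"
      unfolding L_def R_def using P(3) walk' by (auto simp: successively_append_iff successively_drop)
    have "hd L = hd D'"
    proof -
      have "hd D' = hd P"
        using hd' \<open>D' \<noteq> []\<close> by (simp add: hd_conv_nth)
      then show ?thesis
        unfolding L_def using \<open>P \<noteq> []\<close> by simp
    qed
    then show "w (last L) (hd L) \<noteq> 0"
      using \<open>closed_walk w D'\<close> \<open>last L = last D'\<close> unfolding closed_walk_def by simp
  qed
  moreover have "distinct L"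
  proof -
    have "x \<notin> set R" if "x \<in> set P" for x
    proof
      assume "x \<in> set R"
      then obtain m where "m < length R" and "x = R ! m"
        by (auto simp: in_set_conv_nth)
      then have "Suc c + m < length D'" and "x = D' ! (Suc c + m)"
        unfolding R_def by auto
      moreover have "x \<in> {D' ! 0, D' ! c}"
        using inner that \<open>x \<in> set R\<close> set hd' c set_drop_subset[of "Suc c" D'] unfolding R_def by auto
      ultimately show False
        using nth_eq_iff_index_eq[OF \<open>distinct D'\<close>, of "Suc c + m" 0]
          nth_eq_iff_index_eq[OF \<open>distinct D'\<close>, of "Suc c + m" c] c \<open>D' \<noteq> []\<close> by auto
    qed
    then show ?thesis
      unfolding L_def R_def using P(1) \<open>distinct D'\<close> by auto
  qed
  moreover have "3 \<le> length L"
  proof (rule ccontr)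
    assume "\<not> 3 \<le> length L"
    moreover have "length L = length P + length R"
      unfolding L_def by simp
    ultimately have "length P = 2" and "length R = 0"
      using P(2) by linarith+
    then have "R = []"
      by simp
    then have "c = length D' - 1"
      unfolding R_def using c by simp
    moreover have "hd P = P ! 0" and "last P = P ! 1"
      using \<open>length P = 2\<close> \<open>P \<noteq> []\<close> by (simp_all add: hd_conv_nth last_conv_nth)
    ultimately have "{P ! 0, P ! 1} = {last D', hd D'}"
      using c hd' \<open>D' \<noteq> []\<close> by (auto simp: last_conv_nth hd_conv_nth)
    then have "{P ! 0, P ! 1} \<in> cycle_edges D"
      using cycle_edges_last[OF \<open>D' \<noteq> []\<close>] cycle_edges_rotate[of k D]
      unfolding D'_def by (auto simp: insert_commute)
    with new_edge show False ..
  qed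
  moreover have "L ! 0 = P ! 0" and "L ! 1 = P ! 1"
    unfolding L_def using P(2) by (auto simp: nth_append)
  ultimately show ?thesis
    using is_cycle_iff_closed_walk cycle_edges_first[of L] by auto
qed

lemma cycle_edges_disjoint_if_unicyclic:
  assumes "unicyclic V w" and "is_cycle V w D" and "S \<inter> cycle_edges D = {}"
    and "is_cycle V w L" and "e \<in> cycle_edges L"
  shows "e \<notin> S"
  using unicyclic_cycle_edges_eq[OF assms(1,4,2)] assms(3,5) by auto

lemma longest_path_start_is_pendant:
  assumes uni: "unicyclic V w" and D: "is_cycle V w D" and S: "S \<subseteq> edges V w - cycle_edges D"
    and Q: "path_in S Q" "2 \<le> length Q"
    and longest: "\<And>Q'. path_in S Q' \<Longrightarrow> length Q' \<le> length Q"
    and "{Q ! 0, x} \<in> S"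
  shows "x = Q ! 1"
proof -
  have S_weight: "w a b \<noteq> 0" if "{a, b} \<in> S" for a b
    using that S doubleton_in_edges_iff by auto
  have "Q \<noteq> []"
    using Q(2) by auto
  show ?thesis
  proof (cases "x \<in> set Q")
    case False
    have "{x, hd Q} \<in> S"
      using \<open>{Q ! 0, x} \<in> S\<close> \<open>Q \<noteq> []\<close> by (simp add: hd_conv_nth insert_commute)
    then have "path_in S (x # Q)"
      using Q(1) False \<open>Q \<noteq> []\<close> unfolding path_in_def by (simp add: successively_Cons)
    then show ?thesis
      using longest by fastforce
  next
    case True
    then obtain j where j: "j < length Q" "x = Q ! j"
      by (auto simp: in_set_conv_nth)
    have "x \<noteq> Q ! 0"
      using weight_nonzero_imp[OF S_weight[OF \<open>{Q ! 0, x} \<in> S\<close>]] by auto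
    then have "j \<noteq> 0"
      using j by (cases j) auto
    show ?thesis
    proof (rule ccontr)
      assume "x \<noteq> Q ! 1"
      then have "j \<noteq> 1"
        using j by blast
      then have "2 \<le> j"
        using \<open>j \<noteq> 0\<close> by linarith
      define C where "C = take (Suc j) Q"
      have S_walk: "successively (\<lambda>a b. {a, b} \<in> S) Q"
        using Q(1) unfolding path_in_def by simp
      then have walk: "successively (\<lambda>a b. w a b \<noteq> 0) Q"
        by (rule successively_mono) (rule S_weight)
      have "w (Q ! j) (Q ! 0) \<noteq> 0"
        using S_weight[OF \<open>{Q ! 0, x} \<in> S\<close>] j weight_sym by simp
      moreover have "last C = Q ! j" and "hd C = Q ! 0"
        unfolding C_def using j \<open>Q \<noteq> []\<close> by (simp_all add: last_conv_nth hd_conv_nth)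
      ultimately have "closed_walk w C"
        unfolding closed_walk_def using walk j by (auto simp: C_def successively_take)
      moreover have "distinct C" and "3 \<le> length C"
        unfolding C_def using Q(1) j \<open>2 \<le> j\<close> by (auto simp: path_in_def)
      ultimately have "is_cycle V w C"
        using is_cycle_iff_closed_walk by blast
      moreover have "{C ! 0, C ! 1} \<in> cycle_edges C"
        using \<open>3 \<le> length C\<close> by (intro cycle_edges_first) simp
      moreover have "{C ! 0, C ! 1} \<in> S"
        unfolding C_def using successively_nth[OF S_walk, of 0] Q(2) \<open>2 \<le> j\<close> by simp
      ultimately show False
        using cycle_edges_disjoint_if_unicyclic[OF uni D] S by blast
    qed
  qed
qed

lemma pendant_vertex_off_cycle:
  assumes uni: "unicyclic V w" and D: "is_cycle V w D"
    and S: "S \<subseteq> edges V w - cycle_edges D" and "S \<noteq> {}"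
  shows "\<exists>p q. p \<notin> set D \<and> {p, q} \<in> S \<and> (\<forall>x. {p, x} \<in> S \<longrightarrow> x = q)"
proof -
  have S_weight: "w a b \<noteq> 0" if "{a, b} \<in> S" for a b
    using that S doubleton_in_edges_iff by auto
  have S_walk: "successively (\<lambda>a b. {a, b} \<in> S) P" if "path_in S P" for P
    using that unfolding path_in_def by simp
  have walk: "successively (\<lambda>a b. w a b \<noteq> 0) P" if "path_in S P" for P
    using S_walk[OF that] by (rule successively_mono) (rule S_weight)
  obtain e where "e \<in> S"
    using \<open>S \<noteq> {}\<close> by blast
  then obtain a b where "e = {a, b}"
    using S edges_iff by blast
  with \<open>e \<in> S\<close> have "{a, b} \<in> S"
    by simp
  then have "path_in S [a, b]"
    using weight_nonzero_imp[OF S_weight] unfolding path_in_def by auto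
  have "length P < Suc (card V)" if "path_in S P" "2 \<le> length P" for P
  proof -
    have "card (set P) \<le> card V"
      using set_subset_if_walk[OF walk[OF that(1)] that(2)] finite_vertices by (rule card_mono[rotated])
    then show ?thesis
      using that(1) distinct_card unfolding path_in_def by fastforce
  qed
  then obtain P where P: "path_in S P" "2 \<le> length P"
    and longest: "\<And>Q. path_in S Q \<and> 2 \<le> length Q \<Longrightarrow> length Q \<le> length P"
    using ex_has_greatest_nat[of "\<lambda>P. path_in S P \<and> 2 \<le> length P" "[a, b]" length "Suc (card V)"]
      \<open>path_in S [a, b]\<close> by auto
  have "P \<noteq> []"
    using P(2) by auto
  have longest': "length Q \<le> length P" if "path_in S Q" for Q
    using longest[of Q] that P(2) by linarith
  have pendant: "\<exists>p q. p \<notin> set D \<and> {p, q} \<in> S \<and> (\<forall>x. {p, x} \<in> S \<longrightarrow> x = q)"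
    if Q: "path_in S Q" "length Q = length P" "Q ! 0 \<notin> set D" for Q
  proof (intro exI conjI allI impI)
    show "Q ! 0 \<notin> set D"
      by (fact Q(3))
    show "{Q ! 0, Q ! 1} \<in> S"
      using successively_nth[OF S_walk[OF Q(1)], of 0] Q(2) P(2) by simp
    show "x = Q ! 1" if "{Q ! 0, x} \<in> S" for x
      using longest_path_start_is_pendant[OF uni D S Q(1) _ _ that] Q(2) P(2) longest' by simp
  qed
  show ?thesis
  proof (cases "P ! 0 \<in> set D \<and> last P \<in> set D")
    case False
    then consider "P ! 0 \<notin> set D" | "last P \<notin> set D"
      by blast
    then show ?thesis
    proof cases
      case 1
      then show ?thesis
        using pendant[OF P(1) refl] by blast
    next
      case 2
      have "successively (\<lambda>a b. {a, b} \<in> S) (rev P)"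
        using S_walk[OF P(1)] by (simp add: insert_commute)
      then have "path_in S (rev P)"
        using P(1) unfolding path_in_def by simp
      moreover have "rev P ! 0 = last P"
        using \<open>P \<noteq> []\<close> hd_conv_nth[of "rev P"] hd_rev[of P] by simp
      ultimately show ?thesis
        using pendant[of "rev P"] 2 by simp
    qed
  next
    case True
    let ?back = "\<lambda>i. 0 < i \<and> P ! i \<in> set D"
    define j where "j = (LEAST i. ?back i)"
    have "?back (length P - 1)"
      using True P(2) \<open>P \<noteq> []\<close> by (simp add: last_conv_nth)
    then have j: "?back j" and "j \<le> length P - 1"
      unfolding j_def by (rule LeastI, rule Least_le)
    have before_j: "P ! i \<notin> set D" if "0 < i" "i < j" for i
      using not_less_Least[of i ?back] that unfolding j_def by blast
    define E where "E = take (Suc j) P"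
    have "E ! 0 = P ! 0" and "E ! 1 = P ! 1"
      unfolding E_def using j by auto
    then have "{E ! 0, E ! 1} \<in> S"
      using successively_nth[OF S_walk[OF P(1)], of 0] P(2) by simp
    have "\<exists>L. is_cycle V w L \<and> {E ! 0, E ! 1} \<in> cycle_edges L"
    proof (rule cycle_through_ear[OF D])
      show "distinct E"
        using P(1) unfolding E_def path_in_def by simp
      show "2 \<le> length E"
        unfolding E_def using j \<open>j \<le> length P - 1\<close> P(2) by simp
      show "successively (\<lambda>a b. w a b \<noteq> 0) E"
        unfolding E_def by (rule successively_take[OF walk[OF P(1)]])
      have "hd E = P ! 0" and "last E = P ! j"
        unfolding E_def using \<open>j \<le> length P - 1\<close> P(2) \<open>P \<noteq> []\<close>
        by (simp_all add: hd_conv_nth last_conv_nth)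
      then show "hd E \<in> set D" and "last E \<in> set D"
        using True j by simp_all
      show "set E \<inter> set D \<subseteq> {hd E, last E}"
      proof
        fix x assume "x \<in> set E \<inter> set D"
        then have "x \<in> set E" and "x \<in> set D"
          by auto
        then obtain i where "i < length E" and "x = E ! i"
          unfolding in_set_conv_nth by blast
        then have "i \<le> j" and "x = P ! i"
          unfolding E_def by auto
        then have "i = 0 \<or> i = j"
          using before_j \<open>x \<in> set D\<close> by fastforce
        then show "x \<in> {hd E, last E}"
          using \<open>hd E = P ! 0\<close> \<open>last E = P ! j\<close> \<open>x = P ! i\<close> by auto
      qed
      show "{E ! 0, E ! 1} \<notin> cycle_edges D"
        using \<open>{E ! 0, E ! 1} \<in> S\<close> S by auto
    qed
    then show ?thesis
      using cycle_edges_disjoint_if_unicyclic[OF uni D] S \<open>{E ! 0, E ! 1} \<in> S\<close> by blast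
  qed
qed

end

lemma alternating_sequence_odd_period:
  fixes f :: "nat \<Rightarrow> real"
  assumes "odd p" and step: "\<And>i. i < p \<Longrightarrow> f ((i + 1) mod p) = - f i" and "i < p"
  shows "f i = 0"
proof -
  have powers: "f i = (-1) ^ i * f 0" if "i < p" for i
    using that
  proof (induction i)
    case (Suc i)
    then show ?case
      using step[of i] by simp
  qed simp
  have "0 < p"
    using \<open>i < p\<close> by simp
  then have "f 0 = - f (p - 1)"
    using step[of "p - 1"] by simp
  also have "f (p - 1) = f 0"
    using powers[of "p - 1"] \<open>odd p\<close> \<open>0 < p\<close> by simp
  finally have "f 0 = 0"
    by simp
  then show ?thesis
    using powers[OF \<open>i < p\<close>] by simp
qed

lemma cycle_edges_at_successor:
  assumes "distinct D" and "i < length D" and "{D ! ((i + 1) mod length D), x} \<in> cycle_edges D"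
  shows "x = D ! i \<or> x = D ! (((i + 1) mod length D + 1) mod length D)"
proof -
  let ?p = "length D"
  have succ: "(i + 1) mod ?p < ?p"
    using assms(2) by (intro mod_less_divisor) linarith
  obtain k where k: "k < ?p" and "{D ! ((i + 1) mod ?p), x} = {D ! k, D ! ((k + 1) mod ?p)}"
    using assms(3) unfolding cycle_edges_def by auto
  then consider "D ! ((i + 1) mod ?p) = D ! k" and "x = D ! ((k + 1) mod ?p)"
    | "D ! ((i + 1) mod ?p) = D ! ((k + 1) mod ?p)" and "x = D ! k"
    by (auto simp: doubleton_eq_iff)
  then show ?thesis
  proof cases
    case 1
    then have "(i + 1) mod ?p = k"
      using nth_eq_iff_index_eq[OF assms(1) succ k] by blast
    with 1 show ?thesis
      by simp
  next
    case 2
    moreover have "(k + 1) mod ?p < ?p"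
      using k by (intro mod_less_divisor) linarith
    ultimately have "(i + 1) mod ?p = (k + 1) mod ?p"
      using nth_eq_iff_index_eq[OF assms(1) succ] by blast
    moreover have "(j + 1) mod ?p = (if j + 1 = ?p then 0 else j + 1)" if "j < ?p" for j
      using that by auto
    ultimately have "k = i"
      using k assms(2) by (auto split: if_splits)
    with 2 show ?thesis
      by simp
  qed
qed

lemma cycle_weight_nonzero:
  "cycle_weight w D a b \<noteq> 0 \<Longrightarrow> w a b \<noteq> 0 \<and> {a, b} \<in> cycle_edges D"
  unfolding cycle_weight_def by (simp split: if_splits)

context weighted_graph
begin

lemma cycle_graph:
  assumes "is_cycle V w D"
  shows "weighted_graph (set D) (cycle_weight w D)"
proof
  have "cycle_weight w D a b = cycle_weight w D b a" for a b
    unfolding cycle_weight_def using weight_sym by (simp add: insert_commute)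
  moreover have "cycle_weight w D a a = 0" for a
    using weight_nonzero_imp unfolding cycle_weight_def by auto
  moreover have "a \<in> set D \<and> b \<in> set D" if "cycle_weight w D a b \<noteq> 0" for a b
    using cycle_weight_nonzero[OF that] cycle_edges_subset by blast
  ultimately show "wgraph (set D) (cycle_weight w D)"
    unfolding wgraph_def by blast
qed

lemma edges_cycle_graph:
  assumes "is_cycle V w D"
  shows "edges (set D) (cycle_weight w D) = cycle_edges D"
proof
  show "edges (set D) (cycle_weight w D) \<subseteq> cycle_edges D"
    unfolding edges_def by (auto dest: cycle_weight_nonzero)
  show "cycle_edges D \<subseteq> edges (set D) (cycle_weight w D)"
  proof
    fix e assume "e \<in> cycle_edges D"
    then obtain a b where "e = {a, b}" and "w a b \<noteq> 0"
      using cycle_edges_subset_edges[OF assms] edges_iff by blast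
    moreover have "{a, b} \<subseteq> set D"
      using cycle_edges_subset \<open>e \<in> cycle_edges D\<close> \<open>e = {a, b}\<close> by blast
    ultimately show "e \<in> edges (set D) (cycle_weight w D)"
      using \<open>e \<in> cycle_edges D\<close> unfolding edges_def cycle_weight_def by auto
  qed
qed

lemma balanced_vanishes_off_cycle:
  assumes uni: "unicyclic V w" and D: "is_cycle V w D" and "balanced V w \<zeta>"
    and "e \<in> edges V w" and "e \<notin> cycle_edges D"
  shows "\<zeta> e = 0"
proof (rule ccontr)
  assume "\<zeta> e \<noteq> 0"
  define S where "S = {e \<in> edges V w - cycle_edges D. \<zeta> e \<noteq> 0}"
  have S: "S \<subseteq> edges V w - cycle_edges D"
    unfolding S_def by blast
  moreover have "S \<noteq> {}"
    using assms(4,5) \<open>\<zeta> e \<noteq> 0\<close> unfolding S_def by blast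
  ultimately obtain p q where "p \<notin> set D" and "{p, q} \<in> S"
    and only_q: "\<And>x. {p, x} \<in> S \<Longrightarrow> x = q"
    using pendant_vertex_off_cycle[OF uni D] by metis
  then have "w p q \<noteq> 0" and "\<zeta> {p, q} \<noteq> 0"
    unfolding S_def using doubleton_in_edges_iff by blast+
  then have "p \<in> V" and "q \<in> V"
    using weight_nonzero_imp by blast+
  have "w p x * \<zeta> {p, x} = 0" if "x \<in> V - {q}" for x
  proof (rule ccontr)
    assume "w p x * \<zeta> {p, x} \<noteq> 0"
    then have "{p, x} \<in> edges V w" and "\<zeta> {p, x} \<noteq> 0"
      using doubleton_in_edges_iff by auto
    moreover have "{p, x} \<notin> cycle_edges D"
      using \<open>p \<notin> set D\<close> cycle_edges_subset by blast
    ultimately have "{p, x} \<in> S"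
      unfolding S_def by blast
    then show False
      using only_q that by blast
  qed
  then have "(\<Sum>x\<in>V. w p x * \<zeta> {p, x}) = (\<Sum>x\<in>{q}. w p x * \<zeta> {p, x})"
    using \<open>q \<in> V\<close> by (intro sum.mono_neutral_right finite_vertices) auto
  moreover have "(\<Sum>x\<in>V. w p x * \<zeta> {p, x}) = 0"
    using assms(3) \<open>p \<in> V\<close> unfolding balanced_def by blast
  ultimately show False
    using \<open>w p q \<noteq> 0\<close> \<open>\<zeta> {p, q} \<noteq> 0\<close> by simp
qed

lemma unicyclic_nonsingular_subdiv:
  assumes conn: "connected_graph V w" and uni: "unicyclic V w" and D: "is_cycle V w D"
    and "nonsingular (subdiv_verts (set D) (cycle_weight w D)) (subdiv_weight (set D) (cycle_weight w D))"
  shows "nonsingular (subdiv_verts V w) (subdiv_weight V w)"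
proof -
  interpret C: weighted_graph "set D" "cycle_weight w D"
    by (rule cycle_graph[OF D])
  have "(\<forall>z. alternating (cycle_weight w D) z \<longrightarrow> (\<forall>v\<in>set D. z v = 0)) \<and>
    (\<forall>\<zeta>. balanced (set D) (cycle_weight w D) \<zeta> \<longrightarrow> (\<forall>e\<in>cycle_edges D. \<zeta> e = 0))"
    using assms(4) unfolding C.nonsingular_subdiv_iff edges_cycle_graph[OF D] .
  then have C_alternating: "\<And>z. alternating (cycle_weight w D) z \<Longrightarrow> \<forall>v\<in>set D. z v = 0"
    and C_balanced: "\<And>\<zeta>. balanced (set D) (cycle_weight w D) \<zeta> \<Longrightarrow> \<forall>e\<in>cycle_edges D. \<zeta> e = 0"
    by simp_all
  have "set D \<subseteq> V"
    using D unfolding is_cycle_def by blast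
  have "D \<noteq> []"
    using D by (cases D) (simp_all add: is_cycle_def)
  show ?thesis
    unfolding nonsingular_subdiv_iff
  proof (intro conjI allI impI ballI)
    fix z v assume "alternating w z" and "v \<in> V"
    have "alternating (cycle_weight w D) z"
      unfolding alternating_def
    proof (intro allI impI)
      fix a b assume "cycle_weight w D a b \<noteq> 0"
      then have "w a b \<noteq> 0"
        by (rule cycle_weight_nonzero[THEN conjunct1])
      then show "z b = - z a"
        using \<open>alternating w z\<close> unfolding alternating_def by blast
    qed
    then have "z (hd D) = 0"
      using C_alternating \<open>D \<noteq> []\<close> by simp
    moreover have "hd D \<in> V"
      using \<open>D \<noteq> []\<close> \<open>set D \<subseteq> V\<close> by auto
    ultimately show "z v = 0"
      using alternating_vanishes[OF conn \<open>alternating w z\<close> _ _ \<open>v \<in> V\<close>] by blast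
  next
    fix \<zeta> e assume "balanced V w \<zeta>" and "e \<in> edges V w"
    have off_cycle: "\<zeta> e' = 0" if "e' \<in> edges V w" "e' \<notin> cycle_edges D" for e'
      using balanced_vanishes_off_cycle[OF uni D \<open>balanced V w \<zeta>\<close> that] .
    have "(\<Sum>x\<in>set D. cycle_weight w D v x * \<zeta> {v, x}) = 0" if "v \<in> set D" for v
    proof -
      have "(\<Sum>x\<in>set D. cycle_weight w D v x * \<zeta> {v, x}) = (\<Sum>x\<in>V. cycle_weight w D v x * \<zeta> {v, x})"
        using \<open>set D \<subseteq> V\<close> C.weight_nonzero_imp by (intro sum.mono_neutral_left finite_vertices) auto
      also have "\<dots> = (\<Sum>x\<in>V. w v x * \<zeta> {v, x})"
      proof (rule sum.cong[OF refl])
        fix x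
        show "cycle_weight w D v x * \<zeta> {v, x} = w v x * \<zeta> {v, x}"
          using off_cycle[of "{v, x}"] doubleton_in_edges_iff unfolding cycle_weight_def by auto
      qed
      also have "\<dots> = 0"
        using \<open>balanced V w \<zeta>\<close> that \<open>set D \<subseteq> V\<close> unfolding balanced_def by blast
      finally show ?thesis .
    qed
    then have "\<forall>e\<in>cycle_edges D. \<zeta> e = 0"
      using C_balanced unfolding balanced_def by blast
    then show "\<zeta> e = 0"
      using off_cycle \<open>e \<in> edges V w\<close> by blast
  qed
qed

lemma odd_cycle_nonsingular_subdiv:
  assumes D: "is_cycle V w D" and "odd (length D)"
  shows "nonsingular (subdiv_verts (set D) (cycle_weight w D)) (subdiv_weight (set D) (cycle_weight w D))"
proof -
  interpret C: weighted_graph "set D" "cycle_weight w D"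
    by (rule cycle_graph[OF D])
  let ?p = "length D"
  define nx where "nx i = (i + 1) mod ?p" for i
  have "distinct D" and "3 \<le> ?p"
    using D unfolding is_cycle_def by blast+
  have nx: "nx i < ?p" for i
    unfolding nx_def using \<open>3 \<le> ?p\<close> by (intro mod_less_divisor) linarith
  have nx_eq: "nx i = (if i + 1 = ?p then 0 else i + 1)" if "i < ?p" for i
    unfolding nx_def using that by auto
  have step: "cycle_weight w D (D ! i) (D ! nx i) = w (D ! i) (D ! nx i)" if "i < ?p" for i
    unfolding cycle_weight_def nx_def using cycle_edges_nth[OF that] by simp
  have step_nonzero: "w (D ! i) (D ! nx i) \<noteq> 0" if "i < ?p" for i
    using D that unfolding is_cycle_def nx_def by blast
  show ?thesis
    unfolding C.nonsingular_subdiv_iff edges_cycle_graph[OF D]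
  proof (intro conjI allI impI ballI)
    fix z v assume "alternating (cycle_weight w D) z" and "v \<in> set D"
    then have "z (D ! nx i) = - z (D ! i)" if "i < ?p" for i
      using step[OF that] step_nonzero[OF that] unfolding alternating_def by simp
    then have "z (D ! i) = 0" if "i < ?p" for i
      using alternating_sequence_odd_period[of ?p "\<lambda>i. z (D ! i)"] \<open>odd ?p\<close> that
      unfolding nx_def by blast
    then show "z v = 0"
      using \<open>v \<in> set D\<close> by (auto simp: in_set_conv_nth)
  next
    fix \<zeta> e assume "balanced (set D) (cycle_weight w D) \<zeta>" and "e \<in> cycle_edges D"
    define q where "q i = w (D ! i) (D ! nx i) * \<zeta> {D ! i, D ! nx i}" for i
    have "q (nx i) = - q i" if "i < ?p" for i
    proof -
      let ?v = "D ! nx i"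
      have "nx (nx i) \<noteq> i"
        using nx_eq[OF that] nx_eq[OF nx[of i]] \<open>3 \<le> ?p\<close> by auto
      then have "D ! i \<noteq> D ! nx (nx i)"
        using nth_eq_iff_index_eq[OF \<open>distinct D\<close> that nx] by simp
      have only_neighbours: "cycle_weight w D ?v x = 0" if "x \<notin> {D ! i, D ! nx (nx i)}" for x
      proof (rule ccontr)
        assume "cycle_weight w D ?v x \<noteq> 0"
        then have "{?v, x} \<in> cycle_edges D"
          by (rule cycle_weight_nonzero[THEN conjunct2])
        then show False
          using cycle_edges_at_successor[OF \<open>distinct D\<close> \<open>i < ?p\<close>] that unfolding nx_def by blast
      qed
      have "(\<Sum>x\<in>set D. cycle_weight w D ?v x * \<zeta> {?v, x})
          = (\<Sum>x\<in>{D ! i, D ! nx (nx i)}. cycle_weight w D ?v x * \<zeta> {?v, x})"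
        using only_neighbours nth_mem[OF that] nth_mem[OF nx] by (intro sum.mono_neutral_right) auto
      also have "\<dots> = q i + q (nx i)"
        using \<open>D ! i \<noteq> D ! nx (nx i)\<close> step[OF that] step[OF nx] C.weight_sym
        unfolding q_def by (simp add: insert_commute)
      finally show ?thesis
        using \<open>balanced (set D) (cycle_weight w D) \<zeta>\<close> nx[of i] unfolding balanced_def by simp
    qed
    then have "q i = 0" if "i < ?p" for i
      using alternating_sequence_odd_period[of ?p q] \<open>odd ?p\<close> that unfolding nx_def by blast
    moreover obtain i where "i < ?p" and "e = {D ! i, D ! nx i}"
      using \<open>e \<in> cycle_edges D\<close> unfolding cycle_edges_def nx_def by auto
    ultimately show "\<zeta> e = 0"
      using step_nonzero unfolding q_def by simp
  qed
qed

end

context weighted_graph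
begin

lemma nonsingular_subdiv_not_sedentary:
  assumes "nonsingular (subdiv_verts V w) (subdiv_weight V w)" and "x \<in> subdiv_verts V w"
  shows "\<not> sedentary (subdiv_verts V w) (subdiv_weight V w) x \<and>
    not_sedentary (subdiv_verts V w) (subdiv_weight V w) x"
proof -
  have finite: "finite (subdiv_verts V w)"
    unfolding subdiv_verts_def using finite_vertices finite_edges by simp
  have symmetric: "subdiv_weight V w a b = subdiv_weight V w b a" for a b
    by (cases a; cases b) auto
  have odd_powers: "mat_pow (subdiv_verts V w) (subdiv_weight V w) n x x = 0" if "odd n" for n
  proof (rule ccontr)
    have "subdiv_weight V w a b \<noteq> 0 \<Longrightarrow> isl a \<noteq> isl b" for a b
      by (cases a; cases b) auto
    moreover assume "mat_pow (subdiv_verts V w) (subdiv_weight V w) n x x \<noteq> 0"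
    ultimately have "even n"
      using mat_pow_parity[of "subdiv_weight V w" isl] by blast
    with that show False
      by simp
  qed
  obtain s where "s > 0" and "transition (subdiv_verts V w) (subdiv_weight V w) s x x = 0"
    using transition_diag_vanishes[OF finite symmetric assms odd_powers] by blast
  then show ?thesis
    by (rule not_sedentary_if_transition_vanishes)
qed

end

theorem theorem36:
  fixes V :: "'v set" and w :: "'v \<Rightarrow> 'v \<Rightarrow> real"
  assumes "wgraph V w" and "connected_graph V w" and "unicyclic V w"
  shows "((\<forall>cs. is_cycle V w cs \<longrightarrow>
             nonsingular (subdiv_verts (set cs) (cycle_weight w cs))
                         (subdiv_weight (set cs) (cycle_weight w cs)))
          \<longrightarrow> (\<forall>x\<in>subdiv_verts V w.
                 \<not> sedentary (subdiv_verts V w) (subdiv_weight V w) x \<and>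
                 not_sedentary (subdiv_verts V w) (subdiv_weight V w) x))
       \<and> ((unweighted w \<and> \<not> bipartite V w)
          \<longrightarrow> (\<forall>x\<in>subdiv_verts V w.
                 \<not> sedentary (subdiv_verts V w) (subdiv_weight V w) x \<and>
                 not_sedentary (subdiv_verts V w) (subdiv_weight V w) x))"
proof -
  interpret weighted_graph V w
    by (rule weighted_graph.intro) (fact assms(1))
  have no_sedentary: "\<forall>x\<in>subdiv_verts V w. \<not> sedentary (subdiv_verts V w) (subdiv_weight V w) x \<and>
      not_sedentary (subdiv_verts V w) (subdiv_weight V w) x"
    if "is_cycle V w D"
      and "nonsingular (subdiv_verts (set D) (cycle_weight w D)) (subdiv_weight (set D) (cycle_weight w D))"
    for D
    using nonsingular_subdiv_not_sedentary[OF unicyclic_nonsingular_subdiv[OF assms(2,3) that]] by blast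
  obtain C where "is_cycle V w C"
    using unicyclic_has_cycle[OF assms(3)] by blast
  show ?thesis
  proof (intro conjI impI)
    assume all_cycles: "\<forall>cs. is_cycle V w cs \<longrightarrow>
      nonsingular (subdiv_verts (set cs) (cycle_weight w cs)) (subdiv_weight (set cs) (cycle_weight w cs))"
    show "\<forall>x\<in>subdiv_verts V w. \<not> sedentary (subdiv_verts V w) (subdiv_weight V w) x \<and>
        not_sedentary (subdiv_verts V w) (subdiv_weight V w) x"
      using no_sedentary[OF \<open>is_cycle V w C\<close> all_cycles[rule_format, OF \<open>is_cycle V w C\<close>]] .
  next
    assume "unweighted w \<and> \<not> bipartite V w"
    then obtain D where "is_cycle V w D" and "odd (length D)"
      using odd_cycle_if_not_bipartite[OF assms(2)] by blast
    then show "\<forall>x\<in>subdiv_verts V w. \<not> sedentary (subdiv_verts V w) (subdiv_weight V w) x \<and>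
        not_sedentary (subdiv_verts V w) (subdiv_weight V w) x"
      by (intro no_sedentary odd_cycle_nonsingular_subdiv)
  qed
qed

end
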